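(* Let $\mathcal{C}$ be a BMZ-collection in sufficiently general position, and let $\psi,\nu$ be rays in $\mathbb{R}^N$ emanating from $0$ that are both generic for $\mathcal{C}$. Then $\deg_\psi(\mathcal{C})=\deg_\nu(\mathcal{C})$.
   Context: Standing notation: $N=(d+1)(r-1)$; $w_1,\ldots,w_r\in\mathbb{R}^{r-1}$ the vertices of a regular $(r-1)$-simplex centered at $0$; $\varphi_i(x)=(x,1)\otimes w_i\in\mathbb{R}^N$ with $u\otimes v=(u_1v_1,\ldots,u_1v_n,u_2v_1,\ldots,u_mv_n)$; $\Phi(\mathcal{P})=\bigcup_i\{\varphi_i(p):p\in P_i\}$ for an $r$-tuple $\mathcal{P}$ of pairwise disjoint finite sets. A BMZ-collection is $\mathcal{C}=(C_1,\ldots,C_{d+2})$, pairwise disjoint finite subsets of $\mathbb{R}^d$, $|C_1|=\cdots=|C_{d+1}|=r-1$, $C_{d+2}=\{z\}$; ground set $C=\{c_1,\ldots,c_{N+1}\}$, $c_{N+1}=z$, $C_k=\{c_{(k-1)(r-1)+1},\ldots,c_{k(r-1)}\}$. Rainbow $r$-partition: $r$-tuple $(R_1,\ldots,R_r)$ of pairwise disjoint subsets of $C$ with $|R_i\cap C_j|\le1$; maximal if it covers $C$. $\mathbf{R}$: maximal rainbow $r$-partitions with $z\in R_r$. $\mathcal{R}-a$: remove $a$ from its class. $F_{\mathcal{R}}=\operatorname{conv}(\Phi(\mathcal{R}-z))$. Sufficiently general position: for all $\mathcal{R}\in\mathbf{R}$, $\Phi(\mathcal{R}-z)$ is affinely independent,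 and for all $\mathcal{R}\in\mathbf{R}$, $a\in C$, $0\notin\operatorname{aff}(\Phi(\mathcal{R}-a))$. A ray $\psi$ from $0$ is generic for $\mathcal{C}$ if it is disjoint from every ridge $\operatorname{conv}(\Phi(\mathcal{R}-z-a))$, $\mathcal{R}\in\mathbf{R}$, $a\in C\setminus\{z\}$. Signs: $\operatorname{gsgn}(\mathcal{R})=\operatorname{sgn}\det M$, where $M$ is the $N\times N$ matrix with row $j$ equal to $\varphi_i(c_j)$ for $c_j\in R_i$, $j\in[N]$. For $k\in[d+1]$, $\pi_k$ is the permutation of $[r]$ with $\pi_k(j)=i$ iff $c_{(k-1)(r-1)+j}\in R_i$ for $j\in[r-1]$, and $\pi_k(r)$ the remaining index; $\operatorname{csgn}(\mathcal{R})=\prod_k\operatorname{sgn}\pi_k$; $\operatorname{sgn}(\mathcal{R})=\operatorname{gsgn}(\mathcal{R})\operatorname{csgn}(\mathcal{R})$. $\deg_\psi(\mathcal{C})=\sum_{\mathcal{R}\in\mathbf{R}:\ \psi\cap F_{\mathcal{R}}\neq\emptyset}\operatorname{sgn}(\mathcal{R})$. *)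

theory Defs
  imports "Jordan_Normal_Form.Determinant" "HOL-Combinatorics.Permutations"
begin

text \<open>Vectors of varying dimension are Jordan_Normal_Form vectors (type real vec).
  Points of R^d are vectors in carrier_vec d; R^N is carrier_vec N.\<close>

definition bmzN :: "nat \<Rightarrow> nat \<Rightarrow> nat" where
  "bmzN d r = (d + 1) * (r - 1)"

definition tensor :: "real vec \<Rightarrow> real vec \<Rightarrow> real vec" where
  "tensor u v = vec (dim_vec u * dim_vec v) (\<lambda>k. u $ (k div dim_vec v) * v $ (k mod dim_vec v))"

definition hom1 :: "real vec \<Rightarrow> real vec" where
  "hom1 x = vec (dim_vec x + 1) (\<lambda>i. if i < dim_vec x then x $ i else 1)"

definition phi :: "(nat \<Rightarrow> real vec) \<Rightarrow> nat \<Rightarrow> real vec \<Rightarrow> real vec" where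
  "phi w i x = tensor (hom1 x) (w i)"

definition sqdist :: "real vec \<Rightarrow> real vec \<Rightarrow> real" where
  "sqdist x y = (\<Sum>k<dim_vec x. (x $ k - y $ k)^2)"

definition regular_simplex_centered :: "nat \<Rightarrow> (nat \<Rightarrow> real vec) \<Rightarrow> bool" where
  "regular_simplex_centered r w \<longleftrightarrow>
     (\<forall>i\<in>{1..r}. w i \<in> carrier_vec (r - 1)) \<and>
     (\<exists>s>0. \<forall>i\<in>{1..r}. \<forall>j\<in>{1..r}. i \<noteq> j \<longrightarrow> sqdist (w i) (w j) = s) \<and>
     vec (r - 1) (\<lambda>k. \<Sum>i\<in>{1..r}. w i $ k) = 0\<^sub>v (r - 1)"

definition lincomb :: "nat \<Rightarrow> (real vec \<Rightarrow> real) \<Rightarrow> real vec set \<Rightarrow> real vec" where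
  "lincomb n l S = vec n (\<lambda>k. \<Sum>v\<in>S. l v * v $ k)"

definition conv_hull :: "nat \<Rightarrow> real vec set \<Rightarrow> real vec set" where
  "conv_hull n S = {lincomb n l S | l. (\<forall>v\<in>S. 0 \<le> l v) \<and> sum l S = 1}"

definition aff_hull :: "nat \<Rightarrow> real vec set \<Rightarrow> real vec set" where
  "aff_hull n S = {lincomb n l S | l. sum l S = 1}"

definition aff_indep :: "nat \<Rightarrow> real vec set \<Rightarrow> bool" where
  "aff_indep n S \<longleftrightarrow>
     (\<forall>l. sum l S = 0 \<and> lincomb n l S = 0\<^sub>v n \<longrightarrow> (\<forall>v\<in>S. l v = 0))"

text \<open>BMZ-collection, given by the enumeration c_1,...,c_{N+1} of its ground set.\<close>
definition bmz :: "nat \<Rightarrow> nat \<Rightarrow> (nat \<Rightarrow> real vec) \<Rightarrow> bool" where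
  "bmz d r c \<longleftrightarrow> (\<forall>j\<in>{1..bmzN d r + 1}. c j \<in> carrier_vec d) \<and> inj_on c {1..bmzN d r + 1}"

definition groundC :: "nat \<Rightarrow> nat \<Rightarrow> (nat \<Rightarrow> real vec) \<Rightarrow> real vec set" where
  "groundC d r c = c ` {1..bmzN d r + 1}"

definition zpt :: "nat \<Rightarrow> nat \<Rightarrow> (nat \<Rightarrow> real vec) \<Rightarrow> real vec" where
  "zpt d r c = c (bmzN d r + 1)"

definition block :: "nat \<Rightarrow> nat \<Rightarrow> (nat \<Rightarrow> real vec) \<Rightarrow> nat \<Rightarrow> real vec set" where
  "block d r c k = (if k = d + 2 then {zpt d r c}
                    else c ` {(k - 1) * (r - 1) + 1 .. k * (r - 1)})"

text \<open>An r-tuple (R_1,...,R_r) is a function R with R i = {} outside [r].\<close>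
definition rainbow :: "nat \<Rightarrow> nat \<Rightarrow> (nat \<Rightarrow> real vec) \<Rightarrow> (nat \<Rightarrow> real vec set) \<Rightarrow> bool" where
  "rainbow d r c R \<longleftrightarrow>
     (\<forall>i. i \<notin> {1..r} \<longrightarrow> R i = {}) \<and>
     (\<forall>i\<in>{1..r}. R i \<subseteq> groundC d r c) \<and>
     (\<forall>i\<in>{1..r}. \<forall>i'\<in>{1..r}. i \<noteq> i' \<longrightarrow> R i \<inter> R i' = {}) \<and>
     (\<forall>i\<in>{1..r}. \<forall>k\<in>{1..d+2}. card (R i \<inter> block d r c k) \<le> 1)"

definition maximal_rainbow :: "nat \<Rightarrow> nat \<Rightarrow> (nat \<Rightarrow> real vec) \<Rightarrow> (nat \<Rightarrow> real vec set) \<Rightarrow> bool" where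
  "maximal_rainbow d r c R \<longleftrightarrow> rainbow d r c R \<and> (\<Union>i\<in>{1..r}. R i) = groundC d r c"

definition Rset :: "nat \<Rightarrow> nat \<Rightarrow> (nat \<Rightarrow> real vec) \<Rightarrow> (nat \<Rightarrow> real vec set) set" where
  "Rset d r c = {R. maximal_rainbow d r c R \<and> zpt d r c \<in> R r}"

definition rem :: "(nat \<Rightarrow> real vec set) \<Rightarrow> real vec \<Rightarrow> (nat \<Rightarrow> real vec set)" where
  "rem R a = (\<lambda>i. R i - {a})"

definition Phi :: "nat \<Rightarrow> (nat \<Rightarrow> real vec) \<Rightarrow> (nat \<Rightarrow> real vec set) \<Rightarrow> real vec set" where
  "Phi r w R = (\<Union>i\<in>{1..r}. phi w i ` R i)"

definition facet :: "nat \<Rightarrow> nat \<Rightarrow> (nat \<Rightarrow> real vec) \<Rightarrow> (nat \<Rightarrow> real vec)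
    \<Rightarrow> (nat \<Rightarrow> real vec set) \<Rightarrow> real vec set" where
  "facet d r w c R = conv_hull (bmzN d r) (Phi r w (rem R (zpt d r c)))"

definition suff_general_position :: "nat \<Rightarrow> nat \<Rightarrow> (nat \<Rightarrow> real vec) \<Rightarrow> (nat \<Rightarrow> real vec) \<Rightarrow> bool" where
  "suff_general_position d r w c \<longleftrightarrow>
     (\<forall>R\<in>Rset d r c. aff_indep (bmzN d r) (Phi r w (rem R (zpt d r c)))) \<and>
     (\<forall>R\<in>Rset d r c. \<forall>a\<in>groundC d r c.
        0\<^sub>v (bmzN d r) \<notin> aff_hull (bmzN d r) (Phi r w (rem R a)))"

definition ray :: "real vec \<Rightarrow> real vec set" where
  "ray u = {t \<cdot>\<^sub>v u | t. 0 \<le> t}"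

definition generic_ray :: "nat \<Rightarrow> nat \<Rightarrow> (nat \<Rightarrow> real vec) \<Rightarrow> (nat \<Rightarrow> real vec) \<Rightarrow> real vec set \<Rightarrow> bool" where
  "generic_ray d r w c \<psi> \<longleftrightarrow>
     (\<forall>R\<in>Rset d r c. \<forall>a\<in>groundC d r c - {zpt d r c}.
        \<psi> \<inter> conv_hull (bmzN d r) (Phi r w (rem (rem R (zpt d r c)) a)) = {})"

definition cls :: "nat \<Rightarrow> (nat \<Rightarrow> real vec set) \<Rightarrow> real vec \<Rightarrow> nat" where
  "cls r R p = (THE i. i \<in> {1..r} \<and> p \<in> R i)"

definition gsgn :: "nat \<Rightarrow> nat \<Rightarrow> (nat \<Rightarrow> real vec) \<Rightarrow> (nat \<Rightarrow> real vec) \<Rightarrow> (nat \<Rightarrow> real vec set) \<Rightarrow> real" where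
  "gsgn d r w c R = sgn (det (mat (bmzN d r) (bmzN d r)
      (\<lambda>(j, k). phi w (cls r R (c (j + 1))) (c (j + 1)) $ k)))"

definition pik :: "nat \<Rightarrow> (nat \<Rightarrow> real vec) \<Rightarrow> (nat \<Rightarrow> real vec set) \<Rightarrow> nat \<Rightarrow> nat \<Rightarrow> nat" where
  "pik r c R k j =
     (if j \<in> {1..r - 1} then cls r R (c ((k - 1) * (r - 1) + j))
      else if j = r then (THE i. i \<in> {1..r} \<and>
                 i \<notin> (\<lambda>j'. cls r R (c ((k - 1) * (r - 1) + j'))) ` {1..r - 1})
      else j)"

definition csgn :: "nat \<Rightarrow> nat \<Rightarrow> (nat \<Rightarrow> real vec) \<Rightarrow> (nat \<Rightarrow> real vec set) \<Rightarrow> real" where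
  "csgn d r c R = (\<Prod>k\<in>{1..d + 1}. real_of_int (sign (pik r c R k)))"

definition sgnR :: "nat \<Rightarrow> nat \<Rightarrow> (nat \<Rightarrow> real vec) \<Rightarrow> (nat \<Rightarrow> real vec) \<Rightarrow> (nat \<Rightarrow> real vec set) \<Rightarrow> real" where
  "sgnR d r w c R = gsgn d r w c R * csgn d r c R"

definition deg :: "nat \<Rightarrow> nat \<Rightarrow> (nat \<Rightarrow> real vec) \<Rightarrow> (nat \<Rightarrow> real vec) \<Rightarrow> real vec set \<Rightarrow> real" where
  "deg d r w c \<psi> = (\<Sum>R\<in>{R\<in>Rset d r c. \<psi> \<inter> facet d r w c R \<noteq> {}}. sgnR d r w c R)"

end

theory Submission
  imports Defs "HOL-Computational_Algebra.Polynomial"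
begin

(* For every maximal rainbow partition R (with z in the last class) let A_R be the N x N
   matrix whose k-th column is the image phi(c_(k+1)) of the k-th point under the map of
   its class; F_R is the simplex spanned by these columns.  General position makes A_R
   nonsingular, so a ray through u meets F_R iff every Cramer coordinate
   det(A_R with column j replaced by u) / det A_R is nonnegative.  Hence deg_u is a signed
   count of matrices for which u lies in the cone spanned by the columns.

   The first part of the file studies such signed counts abstractly ("pivot systems"): a
   finite family of nonsingular matrices with an involutive pivot that exchanges exactly
   one column and flips the combinatorial sign.  The count is locally constant at points
   lying on at most one wall of each cone, since the two cones adjacent across a wall
   contribute a constant amount; walking along a suitably perturbed segment then shows that
   the count agrees at any two generic points.  The second part shows that BMZ-collections
   form a pivot system (moving one point into the class missing from its block) and that
   generic rays give generic points; the theorem follows. *)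

lemma locally_constant_unit_interval:
  fixes g :: "real \<Rightarrow> real" and B :: "real set"
  assumes fin: "finite B" and b0: "0 \<notin> B" and b1: "1 \<notin> B"
    and loc: "\<forall>t0\<in>{0..1}. \<exists>c. \<forall>\<^sub>F t in nhds t0. t \<in> {0..1} - B \<longrightarrow> g t = c"
  shows "g 0 = g 1"
proof -
  define H where "H t0 = (SOME c. \<forall>\<^sub>F t in nhds t0. t \<in> {0..1} - B \<longrightarrow> g t = c)" for t0
  have Hev: "\<forall>\<^sub>F t in nhds t0. t \<in> {0..1} - B \<longrightarrow> g t = H t0" if "t0 \<in> {0..1}" for t0
    unfolding H_def using someI_ex[OF loc[rule_format, OF that]] .
  have Hpt: "g t0 = H t0" if "t0 \<in> {0..1} - B" for t0
    using eventually_nhds_x_imp_x[OF Hev[of t0]] that by auto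
  have "H 0 = H 1"
  proof (rule connected_local_const[of "{0..1}" 0 1 H])
    show "\<forall>a\<in>{0..1}. \<forall>\<^sub>F b in at a within {0..1}. H a = H b"
    proof
      fix a :: real assume a: "a \<in> {0..1}"
      have "open (- (B - {a}))" using fin by (intro open_Compl finite_imp_closed) auto
      then have off_B: "\<forall>\<^sub>F t in nhds a. t \<in> - (B - {a})"
        by (rule eventually_nhds_in_open) auto
      have "\<forall>\<^sub>F t in nhds a. t \<noteq> a \<longrightarrow> t \<in> {0..1} \<longrightarrow> H a = H t"
        using Hev[OF a] off_B by eventually_elim (use Hpt in auto)
      then show "\<forall>\<^sub>F b in at a within {0..1}. H a = H b" unfolding eventually_at_filter .
    qed
  qed auto
  then show ?thesis using Hpt[of 0] Hpt[of 1] b0 b1 by auto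
qed

lemma det_replace_col_adj:
  assumes A: "A \<in> carrier_mat n n" and b: "b \<in> carrier_vec n" and k: "k < n"
  shows "det (replace_col A b k) = row (adj_mat A) k \<bullet> b"
proof -
  have Ab: "replace_col A b k \<in> carrier_mat n n" using A by (auto simp: replace_col_def)
  show ?thesis unfolding scalar_prod_def using b k A
    by (subst laplace_expansion_column[OF Ab k], auto intro!: sum.cong arg_cong[of _ _ det]
      arg_cong[of _ _ "\<lambda> x. _ * x"] eq_matI
      simp: replace_col_def adj_mat_def Matrix.row_def cofactor_def mat_delete_def ac_simps)
qed

text \<open>Finitely many nonzero linear forms have a common non-root; take a point of the
  moment curve (1, x, x^2, ...) with x avoiding the roots of the associated polynomials.\<close>
lemma exists_vec_off_hyperplanes:
  fixes Ls :: "real vec set"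
  assumes fin: "finite Ls" and car: "Ls \<subseteq> carrier_vec N" and nz: "0\<^sub>v N \<notin> Ls"
  shows "\<exists>w\<in>carrier_vec N. \<forall>l\<in>Ls. l \<bullet> w \<noteq> 0"
proof -
  define mc where "mc x = vec N (\<lambda>i. x ^ i)" for x :: real
  define pl where "pl l = (\<Sum>i<N. monom (l $ i) i)" for l :: "real vec"
  have ev: "l \<bullet> mc x = poly (pl l) x" if "l \<in> Ls" for l x
    using car that unfolding pl_def mc_def scalar_prod_def
    by (auto simp: poly_sum poly_monom intro!: sum.cong)
  have plnz: "pl l \<noteq> 0" if "l \<in> Ls" for l
  proof
    assume 0: "pl l = 0"
    have "l = 0\<^sub>v N"
    proof (rule eq_vecI)
      fix i assume i: "i < dim_vec (0\<^sub>v N :: real vec)"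
      have "coeff (pl l) i = l $ i" unfolding pl_def using i
        by (auto simp: coeff_sum coeff_monom sum.delta)
      with 0 i show "l $ i = 0\<^sub>v N $ i" by simp
    qed (use car that in auto)
    with nz that show False by simp
  qed
  have "finite (\<Union>l\<in>Ls. {x. poly (pl l) x = 0})"
    using fin plnz by (auto intro!: poly_roots_finite)
  then obtain x where x: "x \<notin> (\<Union>l\<in>Ls. {x. poly (pl l) x = 0})"
    using ex_new_if_finite[OF infinite_UNIV_char_0] by blast
  show ?thesis
    by (rule bexI[of _ "mc x"]) (use x ev in \<open>auto simp: mc_def\<close>)
qed

lemma scalar_prod_comb2:
  assumes "x \<in> carrier_vec N" "y \<in> carrier_vec N" "w \<in> carrier_vec N"
  shows "(a \<cdot>\<^sub>v x + b \<cdot>\<^sub>v y) \<bullet> w = a * (x \<bullet> w) + b * (y \<bullet> w)"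
  using assms by (simp add: add_scalar_prod_distrib[of _ N])

lemma same_sign_trans: "(a::real) * b > 0 \<Longrightarrow> b * c > 0 \<Longrightarrow> a * c > 0"
  by (auto simp: zero_less_mult_iff)

lemma same_sign_trans_neg: "(a::real) * b > 0 \<Longrightarrow> b * c < 0 \<Longrightarrow> a * c < 0"
  by (auto simp: zero_less_mult_iff mult_less_0_iff)

text \<open>The joint contribution of two cones adjacent across a wall: it does not depend on
  the side x of the wall on which the point lies.\<close>
lemma wall_pair_contribution:
  fixes x a b c :: real
  assumes "x \<noteq> 0" "a \<noteq> 0" "b \<noteq> 0"
  shows "sgn a * c * (if 0 \<le> x * a then 1 else 0) + sgn b * (- c) * (if 0 \<le> x * b then 1 else 0)
    = c * (sgn a - sgn b) / 2"
  using assms by (cases "x > 0"; cases "a > 0"; cases "b > 0") (auto simp: zero_le_mult_iff)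

lemma affine_zero_eq:
  fixes a b t :: real
  assumes b: "b \<noteq> 0" and e: "(1 - t) * a + t * b = 0"
  shows "t = a / (a - b)"
proof -
  have ab: "a - b \<noteq> 0"
  proof
    assume "a - b = 0"
    with e b show False by (simp add: algebra_simps)
  qed
  have "t * (a - b) = a" using e by (simp add: algebra_simps)
  then show ?thesis using ab by (simp add: field_simps)
qed

lemma affine_common_zero:
  fixes a1 a2 b1 b2 t :: real
  assumes t: "0 < t" and e1: "(1 - t) * a1 + t * b1 = 0" and e2: "(1 - t) * a2 + t * b2 = 0"
  shows "a1 * b2 - a2 * b1 = 0"
proof -
  have "t * (a1 * b2 - a2 * b1) = a1 * (t * b2) - a2 * (t * b1)" by (simp add: algebra_simps)
  also have "\<dots> = a1 * (- ((1-t) * a2)) - a2 * (- ((1-t) * a1))"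
  proof -
    have "t * b1 = - ((1-t) * a1)" "t * b2 = - ((1-t) * a2)" using e1 e2 by linarith+
    then show ?thesis by (simp only:)
  qed
  also have "\<dots> = 0" by (simp add: algebra_simps)
  finally show ?thesis using t by simp
qed

locale pivot_system =
  fixes N :: nat and Rs :: "'r set" and A :: "'r \<Rightarrow> real mat" and cs :: "'r \<Rightarrow> real"
    and P :: "'r \<Rightarrow> nat \<Rightarrow> 'r"
  assumes fin: "finite Rs"
  and Acar: "\<And>R. R \<in> Rs \<Longrightarrow> A R \<in> carrier_mat N N"
  and detnz: "\<And>R. R \<in> Rs \<Longrightarrow> det (A R) \<noteq> 0"
  and P_in: "\<And>R j. R \<in> Rs \<Longrightarrow> j < N \<Longrightarrow> P R j \<in> Rs"
  and P_col: "\<And>R j k i. R \<in> Rs \<Longrightarrow> j < N \<Longrightarrow> k < N \<Longrightarrow> k \<noteq> j \<Longrightarrow> i < N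
      \<Longrightarrow> A (P R j) $$ (i,k) = A R $$ (i,k)"
  and P_inv: "\<And>R j. R \<in> Rs \<Longrightarrow> j < N \<Longrightarrow> P (P R j) j = R"
  and P_cs: "\<And>R j. R \<in> Rs \<Longrightarrow> j < N \<Longrightarrow> cs (P R j) = - cs R"
begin

text \<open>Cramer numerators: p = A R *v x with x_j = D R j p / det (A R).  A point lies in
  the closed cone of A R iff all D R j p have the sign of det (A R); the count F weighs
  these cones by sgn (det (A R)) * cs R.\<close>
definition D where "D R j p = det (replace_col (A R) p j)"

definition in_cone where "in_cone R p \<longleftrightarrow> (\<forall>j<N. 0 \<le> D R j p * det (A R))"

definition weight where "weight R p = sgn (det (A R)) * cs R * (if in_cone R p then 1 else 0)"

definition F where "F p = (\<Sum>R\<in>Rs. weight R p)"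

definition generic where "generic p \<longleftrightarrow> (\<forall>R\<in>Rs. \<forall>j<N. D R j p = 0 \<longrightarrow> \<not> in_cone R p)"

lemma D_adj: "R \<in> Rs \<Longrightarrow> j < N \<Longrightarrow> p \<in> carrier_vec N \<Longrightarrow> D R j p = row (adj_mat (A R)) j \<bullet> p"
  unfolding D_def by (rule det_replace_col_adj[OF Acar])

lemma adj_row_carrier: "R \<in> Rs \<Longrightarrow> j < N \<Longrightarrow> row (adj_mat (A R)) j \<in> carrier_vec N"
  using adj_mat(1)[OF Acar] by auto

lemma D_cramer: "R \<in> Rs \<Longrightarrow> j < N \<Longrightarrow> x \<in> carrier_vec N \<Longrightarrow> D R j (A R *\<^sub>v x) = x $ j * det (A R)"
  unfolding D_def by (rule cramer_lemma_mat[OF Acar])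

lemma D_linear: assumes "R \<in> Rs" "j < N" "p \<in> carrier_vec N" "q \<in> carrier_vec N"
  shows "D R j (a \<cdot>\<^sub>v p + b \<cdot>\<^sub>v q) = a * D R j p + b * D R j q"
  using assms adj_row_carrier[OF assms(1,2)]
  by (simp add: D_adj scalar_prod_add_distrib[of _ N])

lemma cramer_coords: assumes R: "R \<in> Rs" and p: "p \<in> carrier_vec N"
  shows "p = A R *\<^sub>v vec N (\<lambda>j. D R j p / det (A R))"
proof -
  have AR: "A R \<in> carrier_mat N N" by (rule Acar[OF R])
  have adj: "adj_mat (A R) \<in> carrier_mat N N" by (rule adj_mat(1)[OF AR])
  define y where "y = (1 / det (A R)) \<cdot>\<^sub>v (adj_mat (A R) *\<^sub>v p)"
  have "A R *\<^sub>v y = (1 / det (A R)) \<cdot>\<^sub>v (A R *\<^sub>v (adj_mat (A R) *\<^sub>v p))"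
    unfolding y_def using AR adj p by (simp add: mult_mat_vec)
  also have "A R *\<^sub>v (adj_mat (A R) *\<^sub>v p) = (A R * adj_mat (A R)) *\<^sub>v p"
    using AR adj p by simp
  also have "\<dots> = det (A R) \<cdot>\<^sub>v p" unfolding adj_mat(2)[OF AR]
    using p by (intro eq_vecI)
      (auto simp: scalar_prod_def if_distrib[of "(*) _"] if_distrib[of "\<lambda>x. x * _"] cong: if_cong)
  finally have "A R *\<^sub>v y = p" using detnz[OF R] p by (auto simp: smult_smult_assoc)
  moreover have "y = vec N (\<lambda>j. D R j p / det (A R))"
    unfolding y_def using adj p R by (intro eq_vecI) (auto simp: D_adj)
  ultimately show ?thesis by simp
qed

text \<open>The pivoted matrix shares all columns but j, so the j-th Cramer numerator is unchanged.\<close>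
lemma D_pivot: assumes "R \<in> Rs" "j < N" "p \<in> carrier_vec N"
  shows "D (P R j) j p = D R j p"
proof -
  have "replace_col (A (P R j)) p j = replace_col (A R) p j"
    using Acar[OF assms(1)] Acar[OF P_in[OF assms(1,2)]] P_col[OF assms(1,2)]
    by (intro eq_matI) (auto simp: replace_col_def)
  then show ?thesis unfolding D_def by simp
qed

lemma pivot_mult: assumes "R \<in> Rs" "j < N" "x \<in> carrier_vec N" "x $ j = 0"
  shows "A (P R j) *\<^sub>v x = A R *\<^sub>v x"
  using Acar[OF assms(1)] Acar[OF P_in[OF assms(1,2)]] P_col[OF assms(1,2)] assms(3,4)
  by (intro eq_vecI) (auto simp: scalar_prod_def intro!: sum.cong, metis)

lemma pivot_keeps_signs: assumes R: "R \<in> Rs" and J: "J < N" and p: "p \<in> carrier_vec N"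
  and z: "D R J p = 0" and pos: "\<forall>j<N. j \<noteq> J \<longrightarrow> D R j p * det (A R) > 0"
  shows "\<forall>j<N. j \<noteq> J \<longrightarrow> D (P R J) j p * det (A (P R J)) > 0"
proof (intro allI impI)
  fix j assume j: "j < N" "j \<noteq> J"
  define x where "x = vec N (\<lambda>j. D R j p / det (A R))"
  have x: "x \<in> carrier_vec N" unfolding x_def by simp
  have xJ: "x $ J = 0" unfolding x_def using J z by simp
  have "p = A (P R J) *\<^sub>v x"
    using pivot_mult[OF R J x xJ] cramer_coords[OF R p] unfolding x_def by simp
  then have "D (P R J) j p = x $ j * det (A (P R J))"
    using D_cramer[OF P_in[OF R J] j(1) x] by simp
  moreover have "x $ j > 0"
    using pos j unfolding x_def by (simp add: zero_less_mult_iff zero_less_divide_iff)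
  moreover have "det (A (P R J)) \<noteq> 0" by (rule detnz[OF P_in[OF R J]])
  ultimately show "D (P R J) j p * det (A (P R J)) > 0"
    by (simp add: zero_less_mult_iff mult.assoc) (metis linorder_neq_iff)
qed

text \<open>A point is simple if it lies on at most one wall of every cone containing it;
  q is sign-near p0 if q has the sign of p0 in every nonvanishing Cramer numerator
  (as all points of a small neighbourhood of p0 do).\<close>
definition simple_point where
  "simple_point p \<longleftrightarrow>
     (\<forall>R\<in>Rs. in_cone R p \<longrightarrow> (\<forall>J<N. \<forall>J'<N. D R J p = 0 \<longrightarrow> D R J' p = 0 \<longrightarrow> J = J'))"

definition sign_near where
  "sign_near p0 q \<longleftrightarrow> (\<forall>R\<in>Rs. \<forall>j<N. D R j p0 \<noteq> 0 \<longrightarrow> 0 < D R j q * D R j p0)"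

context
  fixes p0 assumes p0: "p0 \<in> carrier_vec N" and simple: "simple_point p0"
begin

definition walls where "walls = {R\<in>Rs. \<exists>J<N. D R J p0 = 0 \<and> in_cone R p0}"

definition wall_col where "wall_col R = (SOME J. J < N \<and> D R J p0 = 0)"

definition across where "across R = P R (wall_col R)"

lemma walls_Rs: "R \<in> walls \<Longrightarrow> R \<in> Rs"
  unfolding walls_def by auto

lemma wall_col: "R \<in> walls \<Longrightarrow> wall_col R < N \<and> D R (wall_col R) p0 = 0"
  unfolding wall_col_def by (rule someI_ex) (auto simp: walls_def)

lemma wall_col_unique: "R \<in> Rs \<Longrightarrow> in_cone R p0 \<Longrightarrow> J < N \<Longrightarrow> D R J p0 = 0 \<Longrightarrow>
    R \<in> walls \<and> wall_col R = J"
  using wall_col[of R] simple unfolding simple_point_def walls_def by blast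

lemma walls_interior: assumes RZ: "R \<in> walls"
  shows "\<forall>j<N. j \<noteq> wall_col R \<longrightarrow> D R j p0 * det (A R) > 0"
proof (intro allI impI)
  fix j assume j: "j < N" "j \<noteq> wall_col R"
  have R: "R \<in> Rs" and iR: "in_cone R p0" using RZ unfolding walls_def by auto
  have "D R j p0 \<noteq> 0" using wall_col_unique[OF R iR j(1)] j by auto
  moreover have "0 \<le> D R j p0 * det (A R)" using iR j unfolding in_cone_def by auto
  moreover have "det (A R) \<noteq> 0" by (rule detnz[OF R])
  ultimately show "D R j p0 * det (A R) > 0" by (simp add: order_le_less)
qed

lemma across_walls: assumes RZ: "R \<in> walls"
  shows "across R \<in> walls \<and> wall_col (across R) = wall_col R \<and> across (across R) = R"
    and "\<forall>j<N. j \<noteq> wall_col R \<longrightarrow> D (across R) j p0 * det (A (across R)) > 0"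
proof -
  have R: "R \<in> Rs" by (rule walls_Rs[OF RZ])
  note JR = wall_col[OF RZ]
  have R': "across R \<in> Rs" unfolding across_def using P_in R JR by auto
  have z': "D (across R) (wall_col R) p0 = 0" unfolding across_def using D_pivot[OF R _ p0] JR
    by auto
  show pos': "\<forall>j<N. j \<noteq> wall_col R \<longrightarrow> D (across R) j p0 * det (A (across R)) > 0"
    unfolding across_def
      by (rule pivot_keeps_signs[OF R _ p0]) (use JR walls_interior[OF RZ] in auto)
  have "in_cone (across R) p0" unfolding in_cone_def
  proof (intro allI impI)
    fix j assume "j < N"
    then show "0 \<le> D (across R) j p0 * det (A (across R))" using pos' z'
      by (cases "j = wall_col R") auto
  qed
  from wall_col_unique[OF R' this _ z'] JR
  have "across R \<in> walls" "wall_col (across R) = wall_col R" by auto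
  moreover have "across (across R) = R"
    using calculation unfolding across_def using P_inv R JR by auto
  ultimately show "across R \<in> walls \<and> wall_col (across R) = wall_col R \<and> across (across R) = R"
    by auto
qed

lemma across_bij: "bij_betw across walls walls"
  by (rule bij_betw_byWitness[of walls across across]) (use across_walls in auto)

lemma weight_off_walls:
  assumes R: "R \<in> Rs - walls" and near: "sign_near p0 q"
  shows "weight R q = weight R p0"
proof -
  have RR: "R \<in> Rs" using R by auto
  have "in_cone R q = in_cone R p0"
  proof
    assume iR: "in_cone R p0"
    show "in_cone R q" unfolding in_cone_def
    proof (intro allI impI)
      fix j assume j: "j < N"
      have nz: "D R j p0 \<noteq> 0" using R iR j unfolding walls_def by auto
      have "D R j p0 * det (A R) > 0" using iR j nz detnz[OF RR] unfolding in_cone_def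
        by (simp add: order_le_less) blast
      with near RR j nz show "0 \<le> D R j q * det (A R)"
        unfolding sign_near_def using same_sign_trans by (meson less_imp_le)
    qed
  next
    assume iq: "in_cone R q"
    show "in_cone R p0"
    proof (rule ccontr)
      assume "\<not> in_cone R p0"
      then obtain j where j: "j < N" and neg: "D R j p0 * det (A R) < 0"
        unfolding in_cone_def by (auto simp: not_le)
      have "D R j q * D R j p0 > 0" using near RR j neg unfolding sign_near_def by fastforce
      hence "D R j q * det (A R) < 0" using neg by (rule same_sign_trans_neg)
      with iq j show False unfolding in_cone_def by (auto simp: not_le[symmetric])
    qed
  qed
  then show ?thesis unfolding weight_def by simp
qed

text \<open>At a generic sign-near point exactly one of two cones adjacent across a wall
  contains it; their joint contribution is a constant.\<close>
lemma weight_wall_pair: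
  assumes RZ: "R \<in> walls" and q: "q \<in> carrier_vec N" and gq: "generic q"
    and near: "sign_near p0 q"
  shows "weight R q + weight (across R) q
    = cs R * (sgn (det (A R)) - sgn (det (A (across R)))) / 2"
proof -
  have R: "R \<in> Rs" by (rule walls_Rs[OF RZ])
  note JR = wall_col[OF RZ]
  have R': "across R \<in> Rs" using across_walls(1)[OF RZ] walls_Rs by auto
  define x where "x = D R (wall_col R) q"
  have x': "D (across R) (wall_col R) q = x" unfolding x_def across_def
    using D_pivot[OF R _ q] JR by auto
  have interior: "\<forall>j<N. j \<noteq> wall_col R \<longrightarrow> D S j q * det (A S) > 0"
    if S: "S \<in> Rs" and posS: "\<forall>j<N. j \<noteq> wall_col R \<longrightarrow> D S j p0 * det (A S) > 0" for S
  proof (intro allI impI)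
    fix j assume j: "j < N" "j \<noteq> wall_col R"
    have p: "D S j p0 * det (A S) > 0" using posS j by auto
    then have "D S j p0 \<noteq> 0" by auto
    with near S j have "D S j q * D S j p0 > 0" unfolding sign_near_def by auto
    then show "D S j q * det (A S) > 0" using p by (rule same_sign_trans)
  qed
  have posq: "\<forall>j<N. j \<noteq> wall_col R \<longrightarrow> D R j q * det (A R) > 0"
    by (rule interior[OF R walls_interior[OF RZ]])
  have posq': "\<forall>j<N. j \<noteq> wall_col R \<longrightarrow> D (across R) j q * det (A (across R)) > 0"
    by (rule interior[OF R' across_walls(2)[OF RZ]])
  have x0: "x \<noteq> 0"
  proof
    assume x0: "x = 0"
    have "in_cone R q" unfolding in_cone_def
    proof (intro allI impI)
      fix j assume "j < N"
      then show "0 \<le> D R j q * det (A R)" using posq x0 x_def by (cases "j = wall_col R") auto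
    qed
    with gq R JR x0 show False unfolding generic_def x_def by auto
  qed
  have i1: "in_cone R q \<longleftrightarrow> 0 \<le> x * det (A R)"
    unfolding in_cone_def using posq JR x_def by (metis less_imp_le)
  have i2: "in_cone (across R) q \<longleftrightarrow> 0 \<le> x * det (A (across R))"
    unfolding in_cone_def using posq' JR x' by (metis less_imp_le)
  have cs': "cs (across R) = - cs R" unfolding across_def using P_cs R JR by auto
  show ?thesis unfolding weight_def i1 i2 cs'
    by (rule wall_pair_contribution[OF x0 detnz[OF R] detnz[OF R']])
qed

lemma F_constant_near_simple:
  "\<exists>c. \<forall>q\<in>carrier_vec N. generic q \<longrightarrow> sign_near p0 q \<longrightarrow> F q = c"
proof (intro exI ballI impI)
  fix q assume q: "q \<in> carrier_vec N" and gq: "generic q" and near: "sign_near p0 q"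
  define K where "K R = cs R * (sgn (det (A R)) - sgn (det (A (across R)))) / 2" for R
  have "F q = (\<Sum>R\<in>Rs - walls. weight R q) + (\<Sum>R\<in>walls. weight R q)"
    unfolding F_def using fin walls_Rs by (subst sum.subset_diff[of walls]) auto
  also have "(\<Sum>R\<in>Rs - walls. weight R q) = (\<Sum>R\<in>Rs - walls. weight R p0)"
    using weight_off_walls[OF _ near] by (rule sum.cong[OF refl])
  also have "(\<Sum>R\<in>walls. weight R q) = (\<Sum>R\<in>walls. K R) / 2"
  proof -
    have "(\<Sum>R\<in>walls. weight (across R) q) = (\<Sum>R\<in>walls. weight R q)"
      by (rule sum.reindex_bij_betw[OF across_bij])
    moreover have "(\<Sum>R\<in>walls. weight R q + weight (across R) q) = (\<Sum>R\<in>walls. K R)"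
      unfolding K_def using weight_wall_pair[OF _ q gq near] by (rule sum.cong[OF refl])
    ultimately show ?thesis by (simp add: sum.distrib)
  qed
  finally show "F q = (\<Sum>R\<in>Rs - walls. weight R p0) + (\<Sum>R\<in>walls. K R) / 2" .
qed

end

definition off_walls where "off_walls w \<longleftrightarrow> (\<forall>R\<in>Rs. \<forall>j<N. D R j w \<noteq> 0)"

definition transversal where
  "transversal x w \<longleftrightarrow> (\<forall>R\<in>Rs. \<forall>j1<N. \<forall>j2<N. j1 \<noteq> j2 \<longrightarrow> (D R j1 x \<noteq> 0 \<or> D R j2 x \<noteq> 0) \<longrightarrow>
     D R j1 x * D R j2 w - D R j2 x * D R j1 w \<noteq> 0)"

lemma off_walls_generic: "off_walls w \<Longrightarrow> generic w"
  unfolding off_walls_def generic_def by auto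

definition seg where "seg u w t = (1 - t) \<cdot>\<^sub>v u + t \<cdot>\<^sub>v w"

context
  fixes u w assumes u: "u \<in> carrier_vec N" and w: "w \<in> carrier_vec N"
    and gu: "generic u" and off: "off_walls w" and tr: "transversal u w"
begin

lemma seg_carrier: "seg u w t \<in> carrier_vec N"
  unfolding seg_def using u w by auto

lemma seg_ends: "seg u w 0 = u" "seg u w 1 = w"
  unfolding seg_def using u w by (auto intro!: eq_vecI)

lemma D_seg: "R \<in> Rs \<Longrightarrow> j < N \<Longrightarrow> D R j (seg u w t) = (1 - t) * D R j u + t * D R j w"
  unfolding seg_def by (rule D_linear[OF _ _ u w])

lemma D_far_end: "R \<in> Rs \<Longrightarrow> j < N \<Longrightarrow> D R j w \<noteq> 0"
  using off unfolding off_walls_def by auto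

lemma seg_simple: assumes t: "t \<in> {0..1}" shows "simple_point (seg u w t)"
  unfolding simple_point_def
proof (intro ballI allI impI)
  fix R J J' assume R: "R \<in> Rs" and iR: "in_cone R (seg u w t)" and J: "J < N" "J' < N"
    and z: "D R J (seg u w t) = 0" "D R J' (seg u w t) = 0"
  show "J = J'"
  proof (rule ccontr)
    assume ne: "J \<noteq> J'"
    show False
    proof (cases "t = 0")
      case True
      then have "seg u w t = u" using seg_ends by simp
      with gu iR R J z show False unfolding generic_def by auto
    next
      case False
      with t have "0 < t" by auto
      have e1: "(1-t) * D R J u + t * D R J w = 0" using z(1) D_seg[OF R J(1)] by simp
      have e2: "(1-t) * D R J' u + t * D R J' w = 0" using z(2) D_seg[OF R J(2)] by simp
      have cross: "D R J u * D R J' w - D R J' u * D R J w = 0"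
        by (rule affine_common_zero[OF \<open>0 < t\<close> e1 e2])
      have "D R J u \<noteq> 0" using e1 D_far_end[OF R J(1)] \<open>0 < t\<close> by auto
      then have "D R J u * D R J' w - D R J' u * D R J w \<noteq> 0"
        by (intro tr[unfolded transversal_def, rule_format, OF R J ne]) simp
      with cross show False by simp
    qed
  qed
qed

text \<open>Each wall hyperplane meets the segment at most once, so only finitely many of its
  points are non-generic.\<close>
lemma seg_nongeneric_finite: "finite {t\<in>{0..1}. \<not> generic (seg u w t)}"
proof (rule finite_subset)
  show "{t\<in>{0..1}. \<not> generic (seg u w t)} \<subseteq> (\<Union>R\<in>Rs. \<Union>j\<in>{..<N}. {D R j u / (D R j u - D R j w)})"
  proof
    fix t assume "t \<in> {t\<in>{0..1}. \<not> generic (seg u w t)}"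
    then obtain R j where R: "R \<in> Rs" and j: "j < N" and z: "D R j (seg u w t) = 0"
      unfolding generic_def by auto
    have "t = D R j u / (D R j u - D R j w)"
      by (rule affine_zero_eq[OF D_far_end[OF R j]]) (use z D_seg[OF R j] in simp)
    then show "t \<in> (\<Union>R\<in>Rs. \<Union>j\<in>{..<N}. {D R j u / (D R j u - D R j w)})"
      using R j by auto
  qed
qed (use fin in auto)

lemma seg_eventually_sign_near: "\<forall>\<^sub>F t in nhds t0. sign_near (seg u w t0) (seg u w t)"
proof -
  have "\<forall>\<^sub>F t in nhds t0. D R j (seg u w t0) \<noteq> 0 \<longrightarrow> 0 < D R j (seg u w t) * D R j (seg u w t0)"
    if R: "R \<in> Rs" and j: "j < N" for R j
  proof (cases "D R j (seg u w t0) = 0")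
    case False
    have "((\<lambda>t. ((1-t) * D R j u + t * D R j w) * D R j (seg u w t0)) \<longlongrightarrow>
        ((1-t0) * D R j u + t0 * D R j w) * D R j (seg u w t0)) (nhds t0)"
      by (intro tendsto_intros filterlim_ident)
    moreover have "((1-t0) * D R j u + t0 * D R j w) * D R j (seg u w t0) > 0"
      using False D_seg[OF R j, of t0] by (simp add: zero_less_mult_iff linorder_neq_iff) blast
    ultimately show ?thesis
      by (rule order_tendstoD(1)[THEN eventually_mono]) (simp add: D_seg[OF R j])
  qed simp
  then have "\<forall>\<^sub>F t in nhds t0. \<forall>R\<in>Rs. \<forall>j\<in>{..<N}.
      D R j (seg u w t0) \<noteq> 0 \<longrightarrow> 0 < D R j (seg u w t) * D R j (seg u w t0)"
    using fin by (intro eventually_ball_finite ballI) auto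
  then show ?thesis unfolding sign_near_def by (rule eventually_mono) auto
qed

lemma F_segment: "F u = F w"
proof -
  let ?B = "{t\<in>{0..1}. \<not> generic (seg u w t)}"
  have "\<forall>t0\<in>{0..1}. \<exists>c. \<forall>\<^sub>F t in nhds t0. t \<in> {0..1} - ?B \<longrightarrow> F (seg u w t) = c"
  proof
    fix t0 :: real assume "t0 \<in> {0..1}"
    from F_constant_near_simple[OF seg_carrier seg_simple[OF this]] obtain c where
      c: "\<forall>q\<in>carrier_vec N. generic q \<longrightarrow> sign_near (seg u w t0) q \<longrightarrow> F q = c" by blast
    show "\<exists>c. \<forall>\<^sub>F t in nhds t0. t \<in> {0..1} - ?B \<longrightarrow> F (seg u w t) = c"
      by (rule exI[of _ c], use seg_eventually_sign_near[of t0] in eventually_elim)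
        (use c seg_carrier in auto)
  qed
  from locally_constant_unit_interval[OF seg_nongeneric_finite _ _ this]
  show ?thesis using gu off_walls_generic[OF off] by (simp add: seg_ends)
qed

end

lemma adj_row_unit: assumes "R \<in> Rs" "j < N" "k < N"
  shows "row (adj_mat (A R)) j \<bullet> (A R *\<^sub>v unit_vec N k) = (if j = k then det (A R) else 0)"
  using assms Acar[OF assms(1)] by (simp add: D_adj[symmetric] D_cramer)

text \<open>The wall hyperplanes of a cone are genuine hyperplanes, and two different wall
  hyperplanes of one cone are distinct: the normals are the rows of adj (A R).\<close>
lemma adj_row_nonzero: assumes R: "R \<in> Rs" and j: "j < N"
  shows "row (adj_mat (A R)) j \<noteq> 0\<^sub>v N"
proof
  assume "row (adj_mat (A R)) j = 0\<^sub>v N"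
  then have "row (adj_mat (A R)) j \<bullet> (A R *\<^sub>v unit_vec N j) = 0"
    using Acar[OF R] by simp
  with adj_row_unit[OF R j j] detnz[OF R] show False by simp
qed

lemma adj_rows_independent:
  assumes R: "R \<in> Rs" and j: "j1 < N" "j2 < N" "j1 \<noteq> j2" and ab: "a \<noteq> 0 \<or> b \<noteq> 0"
  shows "a \<cdot>\<^sub>v row (adj_mat (A R)) j2 + (- b) \<cdot>\<^sub>v row (adj_mat (A R)) j1 \<noteq> 0\<^sub>v N"
proof
  let ?c = "a \<cdot>\<^sub>v row (adj_mat (A R)) j2 + (- b) \<cdot>\<^sub>v row (adj_mat (A R)) j1"
  assume c0: "?c = 0\<^sub>v N"
  have Au: "A R *\<^sub>v unit_vec N k \<in> carrier_vec N" for k using Acar[OF R] by auto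
  have val: "?c \<bullet> (A R *\<^sub>v unit_vec N k) =
      a * (if j2 = k then det (A R) else 0) - b * (if j1 = k then det (A R) else 0)" if "k < N" for k
    using scalar_prod_comb2[OF adj_row_carrier[OF R j(2)] adj_row_carrier[OF R j(1)] Au]
      adj_row_unit[OF R j(2) that] adj_row_unit[OF R j(1) that] by simp
  have zero: "?c \<bullet> (A R *\<^sub>v unit_vec N k) = 0" for k using c0 Au[of k] by simp
  have "a * det (A R) = 0" using val[OF j(2)] zero[of j2] j(3) by simp
  moreover have "b * det (A R) = 0" using val[OF j(1)] zero[of j1] j(3) by simp
  ultimately show False using ab detnz[OF R] by simp
qed

text \<open>For finitely many generic points there is a common far end w for segments
  avoiding the bad configurations: w must avoid finitely many hyperplanes.\<close>
lemma exists_transversal_end: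
  assumes X: "finite X" "X \<subseteq> carrier_vec N"
  shows "\<exists>w\<in>carrier_vec N. off_walls w \<and> (\<forall>x\<in>X. transversal x w)"
proof -
  define r where "r R j = row (adj_mat (A R)) j" for R j
  have rc: "r R j \<in> carrier_vec N" if "R \<in> Rs" "j < N" for R j
    unfolding r_def by (rule adj_row_carrier[OF that])
  define cmb where "cmb x R j1 j2 = D R j1 x \<cdot>\<^sub>v r R j2 + (- D R j2 x) \<cdot>\<^sub>v r R j1" for x R j1 j2
  define I where "I = {(x,R,j1,j2). x \<in> X \<and> R \<in> Rs \<and> j1 < N \<and> j2 < N \<and> j1 \<noteq> j2
      \<and> (D R j1 x \<noteq> 0 \<or> D R j2 x \<noteq> 0)}"
  define Ls where "Ls = (\<lambda>(R,j). r R j) ` (Rs \<times> {..<N}) \<union> (\<lambda>(x,R,j1,j2). cmb x R j1 j2) ` I"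
  have "I \<subseteq> X \<times> Rs \<times> {..<N} \<times> {..<N}" unfolding I_def by auto
  then have "finite I" using X fin by (auto intro: finite_subset)
  then have finLs: "finite Ls" unfolding Ls_def using fin by auto
  have carLs: "Ls \<subseteq> carrier_vec N" unfolding Ls_def I_def cmb_def using rc by auto
  have nzLs: "0\<^sub>v N \<notin> Ls"
  proof
    assume "0\<^sub>v N \<in> Ls"
    then consider (row) R j where "R \<in> Rs" "j < N" "r R j = 0\<^sub>v N"
      | (comb) x R j1 j2 where "(x, R, j1, j2) \<in> I" "cmb x R j1 j2 = 0\<^sub>v N"
      unfolding Ls_def by auto
    then show False
    proof cases
      case row
      then show False using adj_row_nonzero unfolding r_def by blast
    next
      case comb
      then show False using adj_rows_independent unfolding I_def cmb_def r_def by auto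
    qed
  qed
  obtain w where w: "w \<in> carrier_vec N" and wL: "\<forall>l\<in>Ls. l \<bullet> w \<noteq> 0"
    using exists_vec_off_hyperplanes[OF finLs carLs nzLs] by blast
  have Dw: "D R j w = r R j \<bullet> w" if "R \<in> Rs" "j < N" for R j
    unfolding r_def using D_adj[OF that w] .
  have "off_walls w" using wL Dw unfolding off_walls_def Ls_def by auto
  moreover have "transversal x w" if x: "x \<in> X" for x
    unfolding transversal_def
  proof (intro ballI allI impI)
    fix R j1 j2 assume R: "R \<in> Rs" and j: "j1 < N" "j2 < N" "j1 \<noteq> j2" "D R j1 x \<noteq> 0 \<or> D R j2 x \<noteq> 0"
    have "cmb x R j1 j2 \<in> Ls" unfolding Ls_def I_def using R j x
      by (intro UnI2 image_eqI[of _ _ "(x,R,j1,j2)"]) auto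
    hence "cmb x R j1 j2 \<bullet> w \<noteq> 0" using wL by auto
    moreover have "cmb x R j1 j2 \<bullet> w = D R j1 x * D R j2 w - D R j2 x * D R j1 w"
      unfolding cmb_def using scalar_prod_comb2[OF rc[OF R j(2)] rc[OF R j(1)] w]
        Dw[OF R j(1)] Dw[OF R j(2)] by simp
    ultimately show "D R j1 x * D R j2 w - D R j2 x * D R j1 w \<noteq> 0" by simp
  qed
  ultimately show ?thesis using w by blast
qed

theorem F_generic_eq: assumes u: "u \<in> carrier_vec N" and v: "v \<in> carrier_vec N"
  and gu: "generic u" and gv: "generic v"
  shows "F u = F v"
proof -
  obtain w where w: "w \<in> carrier_vec N" "off_walls w" "transversal u w" "transversal v w"
    using exists_transversal_end[of "{u, v}"] u v by auto
  have "F u = F w" by (rule F_segment[OF u w(1) gu w(2,3)])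
  moreover have "F v = F w" by (rule F_segment[OF v w(1) gv w(2,4)])
  ultimately show ?thesis by simp
qed

end

text \<open>Index arithmetic: the points c_1, ..., c_N are arranged in d+1 consecutive blocks of
  q = r-1 points; index j lies in block (j-1) div q + 1 at position (j-1) mod q + 1.\<close>
lemma pred_div_mod_recon:
  "(q::nat) > 0 \<Longrightarrow> j \<ge> 1 \<Longrightarrow> ((j - 1) div q + 1 - 1) * q + ((j - 1) mod q + 1) = j"
  by (simp add: add.commute)

lemma block_offset_div: "(q::nat) > 0 \<Longrightarrow> j' \<in> {1..q} \<Longrightarrow> (k * q + j' - 1) div q = k"
proof -
  assume q: "q > 0" and j: "j' \<in> {1..q}"
  obtain j'' where jj: "j' = Suc j''" using j by (cases j') auto
  have "k * q + j' - 1 = j'' + q * k" using jj by (simp add: mult.commute)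
  then show ?thesis using j q jj by simp
qed

lemma block_offset_mod: "(q::nat) > 0 \<Longrightarrow> j' \<in> {1..q} \<Longrightarrow> (k * q + j' - 1) mod q = j' - 1"
proof -
  assume q: "q > 0" and j: "j' \<in> {1..q}"
  obtain j'' where jj: "j' = Suc j''" using j by (cases j') auto
  have "k * q + j' - 1 = j'' + q * k" using jj by (simp add: mult.commute)
  then show ?thesis using j q jj by simp
qed

lemma pred_div_less: "(q::nat) > 0 \<Longrightarrow> j \<in> {1..(d+1)*q} \<Longrightarrow> (j - 1) div q < d + 1"
  by (auto simp: div_less_iff_less_mult)

lemma block_interval_image: "(q::nat) > 0 \<Longrightarrow> {k*q + 1 .. (k+1)*q} = (\<lambda>j'. k*q + j') ` {1..q}"
proof -
  assume q: "q > 0"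
  show ?thesis
  proof
    show "{k*q + 1 .. (k+1)*q} \<subseteq> (\<lambda>j'. k*q + j') ` {1..q}"
    proof
      fix x assume x: "x \<in> {k*q + 1 .. (k+1)*q}"
      then have "x = k*q + (x - k*q)" "x - k*q \<in> {1..q}" by auto
      then show "x \<in> (\<lambda>j'. k*q + j') ` {1..q}" by blast
    qed
    show "(\<lambda>j'. k*q + j') ` {1..q} \<subseteq> {k*q + 1 .. (k+1)*q}" by auto
  qed
qed

lemma block_offset_bound: "(q::nat) > 0 \<Longrightarrow> k \<in> {1..d+1} \<Longrightarrow> j' \<in> {1..q} \<Longrightarrow> (k-1)*q + j' \<in> {1..(d+1)*q}"
proof -
  assume q: "q > 0" and k: "k \<in> {1..d+1}" and j: "j' \<in> {1..q}"
  have "(k-1)*q + j' \<le> (k-1)*q + q" using j by simp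
  also have "\<dots> = k * q" using k by (cases k) auto
  also have "\<dots> \<le> (d+1)*q" using k by (intro mult_right_mono) auto
  finally show ?thesis using j by auto
qed

locale bmz_setting =
  fixes d r :: nat and w c :: "nat \<Rightarrow> real vec"
  assumes r2: "2 \<le> r" and reg: "regular_simplex_centered r w" and bm: "bmz d r c"
    and sgp: "suff_general_position d r w c"
begin

abbreviation "NN \<equiv> bmzN d r"
abbreviation "z \<equiv> zpt d r c"
abbreviation "G \<equiv> groundC d r c"

lemma c_car: "j \<in> {1..NN+1} \<Longrightarrow> c j \<in> carrier_vec d"
  using bm unfolding bmz_def by auto

lemma c_inj: "inj_on c {1..NN+1}"
  using bm unfolding bmz_def by auto

lemma c_eq_iff: "j \<in> {1..NN+1} \<Longrightarrow> j' \<in> {1..NN+1} \<Longrightarrow> c j = c j' \<longleftrightarrow> j = j'"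
  using c_inj unfolding inj_on_def by blast

lemma w_car: "i \<in> {1..r} \<Longrightarrow> w i \<in> carrier_vec (r-1)"
  using reg unfolding regular_simplex_centered_def by auto

lemma z_eq: "z = c (NN+1)" unfolding zpt_def ..

lemma G_eq: "G = c ` {1..NN+1}" unfolding groundC_def ..

lemma fin_G: "finite G" unfolding G_eq by simp

lemma z_G: "z \<in> G" unfolding G_eq z_eq by auto

lemma Rset_fin: "finite (Rset d r c)"
proof (rule finite_subset)
  show "Rset d r c \<subseteq> {f. \<forall>x. (x \<in> {1..r} \<longrightarrow> f x \<in> Pow G) \<and> (x \<notin> {1..r} \<longrightarrow> f x = {})}"
    unfolding Rset_def maximal_rainbow_def rainbow_def by auto
  show "finite {f. \<forall>x. (x \<in> {1..r} \<longrightarrow> f x \<in> Pow G) \<and> (x \<notin> {1..r} \<longrightarrow> f x = {})}"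
    by (rule finite_set_of_finite_funs) (use fin_G in auto)
qed

lemma R_out: "R \<in> Rset d r c \<Longrightarrow> i \<notin> {1..r} \<Longrightarrow> R i = {}"
  unfolding Rset_def maximal_rainbow_def rainbow_def by auto

lemma R_in: "R \<in> Rset d r c \<Longrightarrow> p \<in> R i \<Longrightarrow> i \<in> {1..r}"
  using R_out by fastforce

lemma R_sub: "R \<in> Rset d r c \<Longrightarrow> R i \<subseteq> G"
  unfolding Rset_def maximal_rainbow_def rainbow_def by (cases "i \<in> {1..r}") auto

lemma R_disj: "R \<in> Rset d r c \<Longrightarrow> i \<noteq> i' \<Longrightarrow> p \<in> R i \<Longrightarrow> p \<notin> R i'"
  using R_in[of R p i] R_in[of R p i']
  unfolding Rset_def maximal_rainbow_def rainbow_def by blast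

lemma R_cov: "R \<in> Rset d r c \<Longrightarrow> p \<in> G \<Longrightarrow> \<exists>i\<in>{1..r}. p \<in> R i"
  unfolding Rset_def maximal_rainbow_def by auto

lemma z_in: "R \<in> Rset d r c \<Longrightarrow> z \<in> R r"
  unfolding Rset_def by auto

lemma fin_block: "finite (block d r c k)"
  unfolding block_def by auto

lemma R_card: "R \<in> Rset d r c \<Longrightarrow> k \<in> {1..d+2} \<Longrightarrow> p \<in> R i \<Longrightarrow> q \<in> R i
   \<Longrightarrow> p \<in> block d r c k \<Longrightarrow> q \<in> block d r c k \<Longrightarrow> p = q"
proof -
  assume R: "R \<in> Rset d r c" and k: "k \<in> {1..d+2}" and pq: "p \<in> R i" "q \<in> R i"
    "p \<in> block d r c k" "q \<in> block d r c k"
  have i: "i \<in> {1..r}" using R_in[OF R pq(1)] .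
  have "card (R i \<inter> block d r c k) \<le> 1" using R i k
    unfolding Rset_def maximal_rainbow_def rainbow_def by auto
  moreover have "finite (R i \<inter> block d r c k)" using fin_block by auto
  ultimately show "p = q" using pq card_le_Suc0_iff_eq by fastforce
qed

lemma cls_eq: "R \<in> Rset d r c \<Longrightarrow> p \<in> R i \<Longrightarrow> cls r R p = i"
  unfolding cls_def
  by (rule the_equality) (use R_in R_disj in blast)+

lemma cls_mem: "R \<in> Rset d r c \<Longrightarrow> p \<in> G \<Longrightarrow> cls r R p \<in> {1..r} \<and> p \<in> R (cls r R p)"
  using R_cov[of R p] cls_eq[of R p] by auto


text \<open>The facet F_R is spanned by the vertices vert R k = phi_i(c_(k+1)), i the class of
  c_(k+1); they are the columns of the matrix vert_mat R.\<close>
definition vert where "vert R k = phi w (cls r R (c (k+1))) (c (k+1))"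

definition vert_mat where "vert_mat R = mat NN NN (\<lambda>(i,k). vert R k $ i)"

lemma r_pos: "r - 1 > 0" using r2 by simp

lemma phi_car: "x \<in> carrier_vec d \<Longrightarrow> i \<in> {1..r} \<Longrightarrow> phi w i x \<in> carrier_vec NN"
  using w_car[of i] unfolding phi_def tensor_def hom1_def bmzN_def by auto

lemma phi_idx: assumes x: "x \<in> carrier_vec d" and i: "i \<in> {1..r}" and a: "a \<le> d" and m: "m < r - 1"
  shows "phi w i x $ (a * (r-1) + m) = (if a < d then x $ a else 1) * w i $ m"
proof -
  have wi: "dim_vec (w i) = r - 1" using w_car[OF i] by auto
  have lt: "a * (r-1) + m < (d+1) * (r-1)"
  proof -
    have "a * (r-1) + m < a * (r-1) + (r-1)" using m by simp
    also have "\<dots> = (a+1) * (r-1)" by simp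
    also have "\<dots> \<le> (d+1) * (r-1)" using a by (intro mult_right_mono) auto
    finally show ?thesis .
  qed
  have dv: "(a * (r - Suc 0) + m) div (r - Suc 0) = a" using m r_pos by simp
  have md: "m mod (r - Suc 0) = m" using m r_pos by simp
  have dv': "(d * (r - Suc 0) + m) div (r - Suc 0) = d" using m r_pos by simp
  show ?thesis unfolding phi_def tensor_def hom1_def using x lt a
    by (auto simp add: wi dv md dv')
qed

lemma Phi_minus: assumes R: "R \<in> Rset d r c" and X: "z \<in> X"
  shows "Phi r w (\<lambda>i. R i - X) = vert R ` {k. k < NN \<and> c (k+1) \<notin> X}"
proof
  show "Phi r w (\<lambda>i. R i - X) \<subseteq> vert R ` {k. k < NN \<and> c (k+1) \<notin> X}"
  proof
    fix v assume "v \<in> Phi r w (\<lambda>i. R i - X)"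
    then obtain i p where i: "i \<in> {1..r}" and p: "p \<in> R i" "p \<notin> X" and v: "v = phi w i p"
      unfolding Phi_def by auto
    have "p \<in> G" using R_sub[OF R] p by auto
    then obtain j where j: "j \<in> {1..NN+1}" and pj: "p = c j" unfolding G_eq by auto
    have "j \<noteq> NN + 1" using p X pj z_eq by auto
    with j have k: "j - 1 < NN" "j - 1 + 1 = j" by auto
    have "cls r R p = i" by (rule cls_eq[OF R p(1)])
    then have "v = vert R (j-1)" unfolding vert_def v using k pj by simp
    then show "v \<in> vert R ` {k. k < NN \<and> c (k+1) \<notin> X}" using k pj p by auto
  qed
next
  show "vert R ` {k. k < NN \<and> c (k+1) \<notin> X} \<subseteq> Phi r w (\<lambda>i. R i - X)"
  proof
    fix v assume "v \<in> vert R ` {k. k < NN \<and> c (k+1) \<notin> X}"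
    then obtain k where k: "k < NN" "c (k+1) \<notin> X" and v: "v = vert R k" by auto
    have "c (k+1) \<in> G" unfolding G_eq using k by auto
    from cls_mem[OF R this] have "cls r R (c (k+1)) \<in> {1..r}" "c (k+1) \<in> R (cls r R (c (k+1)))"
      by auto
    then show "v \<in> Phi r w (\<lambda>i. R i - X)" unfolding Phi_def v vert_def using k by auto
  qed
qed

lemma Phi_rem_z: "R \<in> Rset d r c \<Longrightarrow> Phi r w (rem R z) = vert R ` {..<NN}"
proof -
  assume R: "R \<in> Rset d r c"
  have "{k. k < NN \<and> c (k+1) \<notin> {z}} = {..<NN}"
    using c_eq_iff[of _ "NN+1"] z_eq by auto
  then show ?thesis using Phi_minus[OF R, of "{z}"] unfolding rem_def by simp
qed

lemma Phi_ridge: "R \<in> Rset d r c \<Longrightarrow> j < NN \<Longrightarrow>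
   Phi r w (rem (rem R z) (c (j+1))) = vert R ` ({..<NN} - {j})"
proof -
  assume R: "R \<in> Rset d r c" and j: "j < NN"
  have "{k. k < NN \<and> c (k+1) \<notin> {z, c (j+1)}} = {..<NN} - {j}"
    using c_eq_iff[of _ "NN+1"] c_eq_iff[of _ "j+1"] z_eq j by auto
  moreover have "rem (rem R z) (c (j+1)) = (\<lambda>i. R i - {z, c (j+1)})"
    unfolding rem_def by auto
  ultimately show ?thesis using Phi_minus[OF R, of "{z, c (j+1)}"] by simp
qed

lemma zero_off_aff_hull: "R \<in> Rset d r c \<Longrightarrow> 0\<^sub>v NN \<notin> aff_hull NN (vert R ` {..<NN})"
  using sgp z_G Phi_rem_z unfolding suff_general_position_def by metis

lemma vert_aff_indep: "R \<in> Rset d r c \<Longrightarrow> aff_indep NN (vert R ` {..<NN})"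
  using sgp Phi_rem_z unfolding suff_general_position_def by metis

lemma vert_nonzero: assumes R: "R \<in> Rset d r c" and k: "k < NN" shows "vert R k \<noteq> 0\<^sub>v NN"
proof
  assume 0: "vert R k = 0\<^sub>v NN"
  define S where "S = vert R ` {..<NN}"
  have fS: "finite S" unfolding S_def by auto
  have 0: "0\<^sub>v NN \<in> S" unfolding S_def using 0 k by force
  define l :: "real vec \<Rightarrow> real" where "l v = (if v = 0\<^sub>v NN then 1 else 0)" for v
  have "sum l S = 1" unfolding l_def using fS 0 by (simp add: sum.delta')
  moreover have "lincomb NN l S = 0\<^sub>v NN" unfolding lincomb_def l_def
    by (intro eq_vecI) (auto simp: if_distrib[of "\<lambda>x. x * _"] cong: if_cong)
  ultimately have "0\<^sub>v NN \<in> aff_hull NN S" unfolding aff_hull_def by force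
  with zero_off_aff_hull[OF R] show False unfolding S_def by simp
qed

lemma w_inj: assumes i: "i1 \<in> {1..r}" "i2 \<in> {1..r}" and eq: "w i1 = w i2"
  shows "i1 = i2"
proof (rule ccontr)
  assume ne: "i1 \<noteq> i2"
  from reg obtain s where s: "s > 0" "\<forall>i\<in>{1..r}. \<forall>j\<in>{1..r}. i \<noteq> j \<longrightarrow> sqdist (w i) (w j) = s"
    unfolding regular_simplex_centered_def by auto
  have "sqdist (w i1) (w i2) = s" using s i ne by auto
  moreover have "sqdist (w i1) (w i2) = 0" unfolding sqdist_def eq by simp
  ultimately show False using s by simp
qed

lemma phi_zero: assumes x: "x \<in> carrier_vec d" and i: "i \<in> {1..r}" and w0: "w i = 0\<^sub>v (r-1)"
  shows "phi w i x = 0\<^sub>v NN"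
proof (rule eq_vecI)
  fix n assume "n < dim_vec (0\<^sub>v NN :: real vec)"
  hence n: "n < NN" by simp
  have "phi w i x $ n = hom1 x $ (n div (r-1)) * w i $ (n mod (r-1))"
    using n phi_car[OF x i] w_car[OF i] unfolding phi_def tensor_def by auto
  also have "\<dots> = 0" using w0 r_pos by simp
  finally show "phi w i x $ n = 0\<^sub>v NN $ n" using n by simp
qed (use phi_car[OF x i] in auto)

text \<open>phi is injective on pairs (class, point) with nonzero image: the last block of
  coordinates recovers w_i, any nonzero coordinate of w_i then recovers x.\<close>
lemma phi_inj:
  assumes x: "x1 \<in> carrier_vec d" "x2 \<in> carrier_vec d" and i: "i1 \<in> {1..r}" "i2 \<in> {1..r}"
    and eq: "phi w i1 x1 = phi w i2 x2" and nz: "phi w i1 x1 \<noteq> 0\<^sub>v NN"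
  shows "i1 = i2 \<and> x1 = x2"
proof -
  have "w i1 = w i2"
  proof (rule eq_vecI)
    fix m assume "m < dim_vec (w i2)"
    hence m: "m < r - 1" using w_car[OF i(2)] by auto
    show "w i1 $ m = w i2 $ m"
      using arg_cong[OF eq, of "\<lambda>v. v $ (d * (r-1) + m)"] phi_idx[OF x(1) i(1) _ m, of d]
        phi_idx[OF x(2) i(2) _ m, of d] by simp
  qed (use w_car[OF i(1)] w_car[OF i(2)] in auto)
  then have ii: "i1 = i2" by (rule w_inj[OF i])
  have "w i1 \<noteq> 0\<^sub>v (r-1)" using phi_zero[OF x(1) i(1)] nz by auto
  then obtain m where m: "m < r - 1" "w i1 $ m \<noteq> 0" using w_car[OF i(1)]
    by (metis carrier_vecD eq_vecI index_zero_vec(1) index_zero_vec(2))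
  have "x1 = x2"
  proof (rule eq_vecI)
    fix a assume "a < dim_vec x2"
    hence a: "a < d" using x by auto
    have "x1 $ a * w i1 $ m = x2 $ a * w i1 $ m"
      using arg_cong[OF eq, of "\<lambda>v. v $ (a * (r-1) + m)"] phi_idx[OF x(1) i(1) _ m(1), of a]
        phi_idx[OF x(2) i(2) _ m(1), of a] a ii by simp
    with m show "x1 $ a = x2 $ a" by simp
  qed (use x in auto)
  with ii show ?thesis by simp
qed

lemma vert_inj: assumes R: "R \<in> Rset d r c" shows "inj_on (vert R) {..<NN}"
proof
  fix k1 k2 assume k: "k1 \<in> {..<NN}" "k2 \<in> {..<NN}" and eq: "vert R k1 = vert R k2"
  have G: "c (k1+1) \<in> G" "c (k2+1) \<in> G" unfolding G_eq using k by auto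
  have "c (k1+1) = c (k2+1)"
    using phi_inj[OF c_car c_car conjunct1[OF cls_mem[OF R G(1)]] conjunct1[OF cls_mem[OF R G(2)]]]
      eq vert_nonzero[OF R, of k1] k unfolding vert_def by auto
  then show "k1 = k2" using c_eq_iff[of "k1+1" "k2+1"] k by auto
qed

lemma vert_mat_carrier: "vert_mat R \<in> carrier_mat NN NN" unfolding vert_mat_def by simp

lemma vert_mat_mult:
  "x \<in> carrier_vec NN \<Longrightarrow> i < NN \<Longrightarrow> (vert_mat R *\<^sub>v x) $ i = (\<Sum>k<NN. x $ k * vert R k $ i)"
  unfolding vert_mat_def by (auto simp: scalar_prod_def atLeast0LessThan intro!: sum.cong)

lemma lincomb_verts: assumes R: "R \<in> Rset d r c" and I: "I \<subseteq> {..<NN}"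
  shows "lincomb NN l (vert R ` I) = vert_mat R *\<^sub>v vec NN (\<lambda>k. if k \<in> I then l (vert R k) else 0)"
proof (rule eq_vecI)
  fix i assume "i < dim_vec (vert_mat R *\<^sub>v vec NN (\<lambda>k. if k \<in> I then l (vert R k) else 0))"
  hence i: "i < NN" by (simp add: vert_mat_def)
  have inj: "inj_on (vert R) I" using vert_inj[OF R] I by (rule inj_on_subset)
  have "lincomb NN l (vert R ` I) $ i = (\<Sum>v\<in>vert R ` I. l v * v $ i)"
    unfolding lincomb_def using i by simp
  also have "\<dots> = (\<Sum>k\<in>I. l (vert R k) * vert R k $ i)"
    by (rule sum.reindex[OF inj, unfolded comp_def])
  also have "\<dots> = (\<Sum>k<NN. (if k \<in> I then l (vert R k) else 0) * vert R k $ i)"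
    using I by (auto intro!: sum.mono_neutral_cong_left)
  also have "\<dots> = (vert_mat R *\<^sub>v vec NN (\<lambda>k. if k \<in> I then l (vert R k) else 0)) $ i"
    using i by (subst vert_mat_mult) auto
  finally show "lincomb NN l (vert R ` I) $ i = (vert_mat R *\<^sub>v vec NN (\<lambda>k. if k \<in> I then l (vert R k) else 0)) $ i" .
qed (simp add: lincomb_def vert_mat_def)

lemma sum_verts: assumes R: "R \<in> Rset d r c"
  shows "sum l (vert R ` {..<NN}) = (\<Sum>k<NN. l (vert R k))"
  by (rule sum.reindex[OF vert_inj[OF R], unfolded comp_def])

text \<open>The vertex matrix is nonsingular: a kernel vector would give either an affine
  dependence among the vertices or an affine combination equal to 0.\<close>
lemma vert_mat_det: assumes R: "R \<in> Rset d r c" shows "det (vert_mat R) \<noteq> 0"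
proof
  assume "det (vert_mat R) = 0"
  then obtain x where x: "x \<in> carrier_vec NN" "x \<noteq> 0\<^sub>v NN" "vert_mat R *\<^sub>v x = 0\<^sub>v NN"
    using det_0_iff_vec_prod_zero[OF vert_mat_carrier] by blast
  define S where "S = vert R ` {..<NN}"
  define l where "l v = x $ (the_inv_into {..<NN} (vert R) v)" for v
  have lr: "l (vert R k) = x $ k" if "k < NN" for k
    unfolding l_def using the_inv_into_f_f[OF vert_inj[OF R]] that by simp
  have xv: "vec NN (\<lambda>k. if k \<in> {..<NN} then l (vert R k) else 0) = x"
    using x(1) lr by (intro eq_vecI) auto
  have lc: "lincomb NN l S = 0\<^sub>v NN" unfolding S_def lincomb_verts[OF R subset_refl] xv
    by (rule x(3))
  define \<sigma> where "\<sigma> = (\<Sum>k<NN. x $ k)"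
  have sl: "sum l S = \<sigma>" unfolding S_def sum_verts[OF R] \<sigma>_def using lr by simp
  show False
  proof (cases "\<sigma> = 0")
    case True
    have "\<forall>v\<in>S. l v = 0" using vert_aff_indep[OF R] lc sl True unfolding aff_indep_def S_def by auto
    hence "x = 0\<^sub>v NN" using lr x(1) unfolding S_def by (intro eq_vecI) auto
    with x(2) show False by simp
  next
    case False
    define l' where "l' v = l v / \<sigma>" for v
    have "sum l' S = 1" unfolding l'_def using sl False by (simp add: sum_divide_distrib[symmetric])
    moreover have "lincomb NN l' S = 0\<^sub>v NN"
    proof -
      have "lincomb NN l' S = (1/\<sigma>) \<cdot>\<^sub>v lincomb NN l S" unfolding lincomb_def l'_def
        by (intro eq_vecI) (auto simp: sum_distrib_left)
      then show ?thesis using lc by (auto intro!: eq_vecI)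
    qed
    ultimately have "0\<^sub>v NN \<in> aff_hull NN S" unfolding aff_hull_def by force
    with zero_off_aff_hull[OF R] show False unfolding S_def by simp
  qed
qed

definition blk where "blk j = (j - 1) div (r - 1) + 1"

definition pos where "pos j = (j - 1) mod (r - 1) + 1"

definition block_cls where "block_cls R k = (\<lambda>j'. cls r R (c ((k - 1) * (r - 1) + j')))"

lemma NN_eq: "NN = (d+1) * (r-1)" unfolding bmzN_def ..

lemma idx_bound: "k \<in> {1..d+1} \<Longrightarrow> j' \<in> {1..r-1} \<Longrightarrow> (k-1)*(r-1) + j' \<in> {1..NN}"
  unfolding NN_eq using block_offset_bound[OF r_pos] by blast

lemma blk_pos: assumes j: "j \<in> {1..NN}"
  shows "blk j \<in> {1..d+1}" "pos j \<in> {1..r-1}" "(blk j - 1) * (r-1) + pos j = j"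
proof -
  obtain q where q: "r - 1 = q" "q > 0" using r_pos by auto
  have j': "j \<in> {1..(d+1)*q}" using j unfolding NN_eq q(1) .
  show "blk j \<in> {1..d+1}" unfolding blk_def q(1) using pred_div_less[OF q(2) j'] by auto
  show "pos j \<in> {1..r-1}" unfolding pos_def q(1) using q(2) mod_less_divisor[OF q(2), of "j - 1"]
    by auto
  show "(blk j - 1) * (r-1) + pos j = j" unfolding blk_def pos_def q(1)
    using pred_div_mod_recon[OF q(2), of j] j' by auto
qed

lemma idx_blk: assumes k: "k \<in> {1..d+1}" and j: "j' \<in> {1..r-1}"
  shows "blk ((k-1)*(r-1) + j') = k" "pos ((k-1)*(r-1) + j') = j'"
proof -
  obtain q where q: "r - 1 = q" "q > 0" using r_pos by auto
  have j': "j' \<in> {1..q}" using j q by auto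
  show "blk ((k-1)*(r-1) + j') = k" unfolding blk_def q(1) block_offset_div[OF q(2) j'] using k
    by auto
  show "pos ((k-1)*(r-1) + j') = j'" unfolding pos_def q(1) block_offset_mod[OF q(2) j'] using j'
    by auto
qed

lemma block_eq: "k \<in> {1..d+1} \<Longrightarrow> block d r c k = (\<lambda>j'. c ((k-1)*(r-1) + j')) ` {1..r-1}"
proof -
  assume k: "k \<in> {1..d+1}"
  obtain q where q: "r - 1 = q" "q > 0" using r_pos by auto
  have k_eq: "k = (k - 1) + 1" using k by auto
  have eq: "{(k - 1) * q + 1..k * q} = (\<lambda>j'. (k-1)*q + j') ` {1..q}"
    using block_interval_image[OF q(2), of "k-1"] k_eq by metis
  have "block d r c k = c ` {(k - 1) * q + 1..k * q}" unfolding block_def q(1) using k by auto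
  also have "\<dots> = c ` ((\<lambda>j'. (k-1)*q + j') ` {1..q})" by (simp only: eq)
  finally show ?thesis unfolding q(1) by (simp only: image_image)
qed

lemma block_unique: assumes j: "j \<in> {1..NN}" and k: "k \<in> {1..d+2}" and cb: "c j \<in> block d r c k"
  shows "k = blk j"
proof (cases "k = d+2")
  case True
  then have "c j = c (NN+1)" using cb unfolding block_def zpt_def by auto
  then show ?thesis using c_eq_iff[of j "NN+1"] j by auto
next
  case False
  with k have k': "k \<in> {1..d+1}" by auto
  then obtain j' where j': "j' \<in> {1..r-1}" "c j = c ((k-1)*(r-1) + j')" using cb block_eq by auto
  have "j = (k-1)*(r-1) + j'" using c_eq_iff[of j "(k-1)*(r-1) + j'"] j' idx_bound[OF k' j'(1)] j
    by auto
  then show ?thesis using idx_blk[OF k' j'(1)] by simp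
qed

text \<open>Within a block the points lie in distinct classes, so exactly one class is missing;
  pik R k is the permutation sending position j to the class of the j-th point of block k
  and r to the missing class.\<close>
lemma block_cls_mem: assumes R: "R \<in> Rset d r c" and k: "k \<in> {1..d+1}" and j: "j' \<in> {1..r-1}"
  shows "block_cls R k j' \<in> {1..r}" "c ((k-1)*(r-1) + j') \<in> R (block_cls R k j')"
proof -
  have "c ((k-1)*(r-1) + j') \<in> G" unfolding G_eq using idx_bound[OF k j] by auto
  from cls_mem[OF R this] show "block_cls R k j' \<in> {1..r}" "c ((k-1)*(r-1) + j') \<in> R (block_cls R k j')"
    unfolding block_cls_def by auto
qed

lemma block_cls_inj: assumes R: "R \<in> Rset d r c" and k: "k \<in> {1..d+1}"
  shows "inj_on (block_cls R k) {1..r-1}"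
proof
  fix j1 j2 assume j: "j1 \<in> {1..r-1}" "j2 \<in> {1..r-1}" and eq: "block_cls R k j1 = block_cls R k j2"
  have "c ((k-1)*(r-1) + j1) = c ((k-1)*(r-1) + j2)"
  proof -
    have m1: "c ((k-1)*(r-1) + j1) \<in> R (block_cls R k j1)" by (rule block_cls_mem(2)[OF R k j(1)])
    have m2: "c ((k-1)*(r-1) + j2) \<in> R (block_cls R k j1)" using block_cls_mem(2)[OF R k j(2)] eq
      by simp
    have b1: "c ((k-1)*(r-1) + j1) \<in> block d r c k" using block_eq[OF k] j(1) by auto
    have b2: "c ((k-1)*(r-1) + j2) \<in> block d r c k" using block_eq[OF k] j(2) by auto
    have k': "k \<in> {1..d+2}" using k by auto
    show ?thesis by (rule R_card[OF R k' m1 m2 b1 b2])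
  qed
  then have "(k-1)*(r-1) + j1 = (k-1)*(r-1) + j2"
    using c_eq_iff idx_bound[OF k j(1)] idx_bound[OF k j(2)] by auto
  then show "j1 = j2" by simp
qed

lemma missing_class_ex: assumes R: "R \<in> Rset d r c" and k: "k \<in> {1..d+1}"
  shows "\<exists>m. {1..r} - block_cls R k ` {1..r-1} = {m}"
proof -
  have sub: "block_cls R k ` {1..r-1} \<subseteq> {1..r}" using block_cls_mem[OF R k] by auto
  have "card (block_cls R k ` {1..r-1}) = r - 1" using card_image[OF block_cls_inj[OF R k]] by simp
  then have "card ({1..r} - block_cls R k ` {1..r-1}) = 1" using card_Diff_subset[OF _ sub] r2
    by simp
  then show ?thesis by (rule card_1_singletonE) auto
qed

lemma pik_in: "j \<in> {1..r-1} \<Longrightarrow> pik r c R k j = block_cls R k j"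
  unfolding pik_def block_cls_def by simp

lemma pik_r: assumes R: "R \<in> Rset d r c" and k: "k \<in> {1..d+1}"
  shows "pik r c R k r \<in> {1..r}" "pik r c R k r \<notin> block_cls R k ` {1..r-1}"
    "\<And>l. l \<in> {1..r} \<Longrightarrow> l \<notin> block_cls R k ` {1..r-1} \<Longrightarrow> l = pik r c R k r"
proof -
  obtain m where m: "{1..r} - block_cls R k ` {1..r-1} = {m}" using missing_class_ex[OF R k] by auto
  have nr: "(r \<in> {1..r-1}) = False" using r2 by auto
  have "pik r c R k r = (THE i. i \<in> {1..r} \<and> i \<notin> block_cls R k ` {1..r-1})"
    unfolding pik_def by (simp only: nr if_False if_True simp_thms block_cls_def)
  also have "\<dots> = m" by (rule the_equality) (use m in blast)+
  finally have pm: "pik r c R k r = m" .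
  show "pik r c R k r \<in> {1..r}" "pik r c R k r \<notin> block_cls R k ` {1..r-1}" using m pm by auto
  show "\<And>l. l \<in> {1..r} \<Longrightarrow> l \<notin> block_cls R k ` {1..r-1} \<Longrightarrow> l = pik r c R k r" using m pm by auto
qed

lemma pik_out: "j \<notin> {1..r} \<Longrightarrow> pik r c R k j = j"
  unfolding pik_def using r2 by auto

lemma pik_permutes: assumes R: "R \<in> Rset d r c" and k: "k \<in> {1..d+1}"
  shows "pik r c R k permutes {1..r}"
proof (rule bij_imp_permutes)
  have split: "{1..r} = insert r {1..r-1}" using r2 by auto
  have "pik r c R k ` {1..r-1} = block_cls R k ` {1..r-1}"
    by (rule image_cong[OF refl pik_in])
  then have "pik r c R k ` {1..r} = insert (pik r c R k r) (block_cls R k ` {1..r-1})"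
    by (subst split) simp
  also have "\<dots> = {1..r}" using pik_r[OF R k] block_cls_mem(1)[OF R k] by blast
  finally have img: "pik r c R k ` {1..r} = {1..r}" .
  moreover have "inj_on (pik r c R k) {1..r}" by (rule eq_card_imp_inj_on) (simp, subst img, simp)
  ultimately show "bij_betw (pik r c R k) {1..r} {1..r}" by (simp add: bij_betw_def)
  show "\<And>x. x \<notin> {1..r} \<Longrightarrow> pik r c R k x = x" by (rule pik_out)
qed

lemma pik_perm: "R \<in> Rset d r c \<Longrightarrow> k \<in> {1..d+1} \<Longrightarrow> permutation (pik r c R k)"
  using pik_permutes permutation_permutes by blast


text \<open>The pivot: moving the point c_j from its class to the class free_class R j missing
  from its block gives another maximal rainbow partition, differing from R only in the
  class of c_j, hence only in the vertex of c_j.\<close>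
definition free_class where "free_class R j = pik r c R (blk j) r"

definition move where "move R j = (\<lambda>l. if l = cls r R (c j) then R l - {c j}
   else if l = free_class R j then insert (c j) (R l) else R l)"

context
  fixes R j assumes R: "R \<in> Rset d r c" and j: "j \<in> {1..NN}"
begin

lemma c_j_ground: "c j \<in> G" unfolding G_eq using j by auto

lemma c_j_ne_z: "c j \<noteq> z" using c_eq_iff[of j "NN+1"] j z_eq by auto

lemma cls_c_j: "cls r R (c j) \<in> {1..r}" "c j \<in> R (cls r R (c j))" using cls_mem[OF R c_j_ground]
  by auto

lemma blk_pos_j: "blk j \<in> {1..d+1}" "pos j \<in> {1..r-1}" "(blk j - 1) * (r-1) + pos j = j"
  using blk_pos[OF j] by auto

lemma cls_c_j_block: "cls r R (c j) = block_cls R (blk j) (pos j)"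
  unfolding block_cls_def using blk_pos_j(3) by simp

lemma free_class_props: "free_class R j \<in> {1..r}" "free_class R j \<notin> block_cls R (blk j) ` {1..r-1}"
  unfolding free_class_def using pik_r(1,2)[OF R blk_pos_j(1)] by auto

lemma free_class_ne: "free_class R j \<noteq> cls r R (c j)"
  using free_class_props(2) cls_c_j_block blk_pos_j(2) by auto

lemma free_class_off_block: "q \<in> R (free_class R j) \<Longrightarrow> q \<notin> block d r c (blk j)"
proof
  assume q: "q \<in> R (free_class R j)" "q \<in> block d r c (blk j)"
  then obtain j' where j': "j' \<in> {1..r-1}" "q = c ((blk j - 1)*(r-1) + j')"
    using block_eq[OF blk_pos_j(1)] by auto
  have "cls r R q = free_class R j" by (rule cls_eq[OF R q(1)])
  then have "free_class R j = block_cls R (blk j) j'" unfolding block_cls_def j'(2) by simp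
  with free_class_props(2) j'(1) show False by auto
qed

lemma mem_move: "p \<in> move R j l \<longleftrightarrow> (if p = c j then l = free_class R j else p \<in> R l)"
proof (cases "p = c j")
  case True
  have "c j \<in> R l \<longleftrightarrow> l = cls r R (c j)" using cls_c_j R_disj[OF R] by metis
  then show ?thesis unfolding move_def using True free_class_ne by auto
next
  case False
  then show ?thesis unfolding move_def by auto
qed

text \<open>After the move every class still meets every block at most once: the only new
  point c_j goes to a class that avoided its block.\<close>
lemma move_rainbow:
  assumes k: "k \<in> {1..d+2}" and p: "p \<in> move R j l" "p \<in> block d r c k"
    and q: "q \<in> move R j l" "q \<in> block d r c k"
  shows "p = q"
proof (cases "p = c j"; cases "q = c j")
  assume pa: "p = c j" and qa: "q \<noteq> c j"
  have "k = blk j" using block_unique[OF j k] p pa by auto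
  moreover have "q \<in> R (free_class R j)" using q qa p pa mem_move by auto
  ultimately show ?thesis using free_class_off_block q by auto
next
  assume pa: "p \<noteq> c j" and qa: "q = c j"
  have "k = blk j" using block_unique[OF j k] q qa by auto
  moreover have "p \<in> R (free_class R j)" using q qa p pa mem_move by auto
  ultimately show ?thesis using free_class_off_block p by auto
next
  assume pa: "p \<noteq> c j" and qa: "q \<noteq> c j"
  then show ?thesis using R_card[OF R k, of p l q] p q mem_move by auto
qed simp

lemma move_in: "move R j \<in> Rset d r c"
proof -
  let ?R = "move R j"
  have out: "\<forall>l. l \<notin> {1..r} \<longrightarrow> ?R l = {}"
  proof (intro allI impI)
    fix l assume l: "l \<notin> {1..r}"
    show "?R l = {}" using mem_move[of _ l] R_out[OF R l] free_class_props(1) l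
      by (auto split: if_splits)
  qed
  have sub: "\<forall>l\<in>{1..r}. ?R l \<subseteq> G"
  proof (intro ballI subsetI)
    fix l p assume "p \<in> ?R l"
    then show "p \<in> G" using mem_move[of p l] R_sub[OF R, of l] c_j_ground by (cases "p = c j") auto
  qed
  have disj: "\<forall>l\<in>{1..r}. \<forall>l'\<in>{1..r}. l \<noteq> l' \<longrightarrow> ?R l \<inter> ?R l' = {}"
    using mem_move R_disj[OF R] by (auto split: if_splits)
  have card: "\<forall>l\<in>{1..r}. \<forall>k\<in>{1..d+2}. card (?R l \<inter> block d r c k) \<le> 1"
    using move_rainbow fin_block by (auto simp: card_le_Suc0_iff_eq)
  have cov: "(\<Union>l\<in>{1..r}. ?R l) = G"
  proof
    show "(\<Union>l\<in>{1..r}. ?R l) \<subseteq> G" using sub by auto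
    show "G \<subseteq> (\<Union>l\<in>{1..r}. ?R l)"
    proof
      fix p assume p: "p \<in> G"
      show "p \<in> (\<Union>l\<in>{1..r}. ?R l)"
      proof (cases "p = c j")
        case True then show ?thesis using mem_move free_class_props(1) by auto
      next
        case False
        then show ?thesis using R_cov[OF R p] mem_move by auto
      qed
    qed
  qed
  have zr: "z \<in> ?R r" using mem_move z_in[OF R] c_j_ne_z by auto
  show ?thesis unfolding Rset_def maximal_rainbow_def rainbow_def
    using out sub disj card cov zr by blast
qed

lemma cls_move: "p \<in> G \<Longrightarrow> p \<noteq> c j \<Longrightarrow> cls r (move R j) p = cls r R p"
  using cls_eq[OF move_in, of p "cls r R p"] cls_mem[OF R, of p] mem_move by auto

lemma cls_move_moved: "cls r (move R j) (c j) = free_class R j"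
  using cls_eq[OF move_in, of "c j" "free_class R j"] mem_move by auto

lemma block_cls_move:
  assumes k': "k' \<in> {1..d+1}" and j': "j' \<in> {1..r-1}" and ne: "(k'-1)*(r-1) + j' \<noteq> j"
  shows "block_cls (move R j) k' j' = block_cls R k' j'"
proof -
  have "c ((k'-1)*(r-1) + j') \<noteq> c j" using c_eq_iff idx_bound[OF k' j'] j ne by auto
  moreover have "c ((k'-1)*(r-1) + j') \<in> G" using idx_bound[OF k' j'] unfolding G_eq by auto
  ultimately show ?thesis unfolding block_cls_def using cls_move by simp
qed

lemma free_class_move: "free_class (move R j) j = cls r R (c j)"
proof -
  have "cls r R (c j) = pik r c (move R j) (blk j) r"
  proof (rule pik_r(3)[OF move_in blk_pos_j(1)])
    show "cls r R (c j) \<in> {1..r}" by (rule cls_c_j(1))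
    show "cls r R (c j) \<notin> block_cls (move R j) (blk j) ` {1..r-1}"
    proof
      assume "cls r R (c j) \<in> block_cls (move R j) (blk j) ` {1..r-1}"
      then obtain j' where j': "j' \<in> {1..r-1}" "cls r R (c j) = block_cls (move R j) (blk j) j'"
        by auto
      show False
      proof (cases "j' = pos j")
        case True
        then have "block_cls (move R j) (blk j) j' = free_class R j" unfolding block_cls_def
          using blk_pos_j(3) cls_move_moved by simp
        with j' free_class_ne show False by simp
      next
        case False
        then have ne: "(blk j - 1)*(r-1) + j' \<noteq> j" using idx_blk[OF blk_pos_j(1) j'(1)] by metis
        have "block_cls R (blk j) j' = block_cls R (blk j) (pos j)"
          using j' block_cls_move[OF blk_pos_j(1) j'(1) ne] cls_c_j_block by simp
        with block_cls_inj[OF R blk_pos_j(1)] j'(1) blk_pos_j(2) False show False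
          unfolding inj_on_def by blast
      qed
    qed
  qed
  then show ?thesis unfolding free_class_def by simp
qed

text \<open>Moving the same point again restores R, since its old class is now the missing one.\<close>
lemma move_move: "move (move R j) j = R"
proof -
  have *: "p \<in> move (move R j) j l \<longleftrightarrow> p \<in> R l" for l p
  proof -
    have "p \<in> move (move R j) j l \<longleftrightarrow> (if p = c j then l = free_class (move R j) j else p \<in> move R j l)"
      unfolding move_def[of "move R j"] using cls_move_moved free_class_move mem_move[of p]
      by (auto simp: free_class_ne[symmetric])
    also have "\<dots> \<longleftrightarrow> p \<in> R l"
      using free_class_move mem_move cls_c_j R_disj[OF R] by (auto, metis)
    finally show ?thesis .
  qed
  show ?thesis by (simp add: fun_eq_iff set_eq_iff *)
qed

lemma pik_move_other: assumes k': "k' \<in> {1..d+1}" "k' \<noteq> blk j"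
  shows "pik r c (move R j) k' = pik r c R k'"
proof -
  have clq: "block_cls (move R j) k' j' = block_cls R k' j'" if "j' \<in> {1..r-1}" for j'
  proof (rule block_cls_move[OF k'(1) that])
    show "(k'-1)*(r-1) + j' \<noteq> j" using idx_blk[OF k'(1) that] k'(2) by metis
  qed
  have img: "block_cls (move R j) k' ` {1..r-1} = block_cls R k' ` {1..r-1}" using clq
    by (rule image_cong[OF refl])
  have pr: "pik r c (move R j) k' r = pik r c R k' r"
    using pik_r(1,2)[OF move_in k'(1)] pik_r(3)[OF R k'(1)] img by metis
  show ?thesis
  proof
    fix x show "pik r c (move R j) k' x = pik r c R k' x"
      using pr pik_in[of x] clq pik_out by (cases "x \<in> {1..r-1}"; cases "x = r") auto
  qed
qed

text \<open>In the block of c_j the move composes pik with a transposition, flipping csgn.\<close>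
lemma pik_move_same:
  "pik r c (move R j) (blk j) = pik r c R (blk j) \<circ> Transposition.transpose (pos j) r"
proof
  fix x
  have pr: "pos j \<noteq> r" using blk_pos_j(2) r2 by auto
  show "pik r c (move R j) (blk j) x = (pik r c R (blk j) \<circ> Transposition.transpose (pos j) r) x"
  proof (cases "x \<in> {1..r-1}")
    case True
    show ?thesis
    proof (cases "x = pos j")
      case True
      have "pik r c (move R j) (blk j) x = block_cls (move R j) (blk j) (pos j)"
        using pik_in blk_pos_j(2) True by simp
      also have "\<dots> = free_class R j" unfolding block_cls_def using blk_pos_j(3) cls_move_moved
        by simp
      finally show ?thesis using True unfolding free_class_def by simp
    next
      case False
      have ne: "(blk j - 1)*(r-1) + x \<noteq> j" using idx_blk[OF blk_pos_j(1) \<open>x \<in> {1..r-1}\<close>] False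
        by metis
      have xr: "x \<noteq> r" using \<open>x \<in> {1..r-1}\<close> by auto
      show ?thesis
        using pik_in[OF \<open>x \<in> {1..r-1}\<close>] block_cls_move[OF blk_pos_j(1) \<open>x \<in> {1..r-1}\<close> ne] False xr
        by simp
    qed
  next
    case False
    show ?thesis
    proof (cases "x = r")
      case True
      have "pik r c (move R j) (blk j) x = cls r R (c j)" using free_class_move True
        unfolding free_class_def by simp
      also have "\<dots> = pik r c R (blk j) (pos j)" using cls_c_j_block pik_in[OF blk_pos_j(2)] by simp
      finally show ?thesis using True by simp
    next
      case xr: False
      with False have "x \<notin> {1..r}" by auto
      moreover have "x \<noteq> pos j" using False blk_pos_j(2) by auto
      ultimately show ?thesis using pik_out xr by simp
    qed
  qed
qed

lemma csgn_move: "csgn d r c (move R j) = - csgn d r c R"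
proof -
  let ?k = "blk j"
  have fin: "finite {1..d+1}" by simp
  have pr: "pos j \<noteq> r" using blk_pos_j(2) r2 by auto
  have "sign (pik r c (move R j) ?k) = - sign (pik r c R ?k)"
    unfolding pik_move_same using pr
    by (simp add: sign_compose[OF pik_perm[OF R blk_pos_j(1)] permutation_swap_id] sign_swap_id)
  moreover have "(\<Prod>k\<in>{1..d+1} - {?k}. real_of_int (sign (pik r c (move R j) k))) =
      (\<Prod>k\<in>{1..d+1} - {?k}. real_of_int (sign (pik r c R k)))"
    using pik_move_other by (intro prod.cong) auto
  ultimately show ?thesis unfolding csgn_def
    using prod.remove[OF fin blk_pos_j(1), of "\<lambda>k. real_of_int (sign (pik r c (move R j) k))"]
      prod.remove[OF fin blk_pos_j(1), of "\<lambda>k. real_of_int (sign (pik r c R k))"] by simp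
qed

lemma vert_move: "k0 < NN \<Longrightarrow> k0 + 1 \<noteq> j \<Longrightarrow> vert (move R j) k0 = vert R k0"
proof -
  assume k0: "k0 < NN" "k0 + 1 \<noteq> j"
  have "c (k0+1) \<noteq> c j" using c_eq_iff[of "k0+1" j] j k0 by auto
  moreover have "c (k0+1) \<in> G" using k0 unfolding G_eq by auto
  ultimately show ?thesis unfolding vert_def using cls_move by simp
qed

end


definition pivot where "pivot R j0 = move R (j0 + 1)"

lemma pivot_system_inst: "pivot_system NN (Rset d r c) vert_mat (csgn d r c) pivot"
proof
  show "finite (Rset d r c)" by (rule Rset_fin)
  show "\<And>R. R \<in> Rset d r c \<Longrightarrow> vert_mat R \<in> carrier_mat NN NN" by (rule vert_mat_carrier)
  show "\<And>R. R \<in> Rset d r c \<Longrightarrow> det (vert_mat R) \<noteq> 0" by (rule vert_mat_det)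
  show "\<And>R j. R \<in> Rset d r c \<Longrightarrow> j < NN \<Longrightarrow> pivot R j \<in> Rset d r c"
    unfolding pivot_def by (rule move_in) auto
  show "vert_mat (pivot R j) $$ (i, k) = vert_mat R $$ (i, k)"
    if "R \<in> Rset d r c" "j < NN" "k < NN" "k \<noteq> j" "i < NN"
    for R j k i
  proof -
    have "vert (move R (j+1)) k = vert R k" by (rule vert_move) (use that in auto)
    then show ?thesis unfolding pivot_def vert_mat_def using that by simp
  qed
  show "\<And>R j. R \<in> Rset d r c \<Longrightarrow> j < NN \<Longrightarrow> pivot (pivot R j) j = R"
    unfolding pivot_def by (rule move_move) auto
  show "\<And>R j. R \<in> Rset d r c \<Longrightarrow> j < NN \<Longrightarrow> csgn d r c (pivot R j) = - csgn d r c R"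
    unfolding pivot_def by (rule csgn_move) auto
qed

end

sublocale bmz_setting \<subseteq> ps: pivot_system "bmzN d r" "Rset d r c" vert_mat "csgn d r c" pivot
  by (rule pivot_system_inst)

context bmz_setting begin

lemma cone_hit: assumes R: "R \<in> Rset d r c" and I: "I \<subseteq> {..<NN}" and x: "x \<in> carrier_vec NN"
  and nn: "\<forall>k<NN. 0 \<le> x $ k" and out: "\<forall>k<NN. k \<notin> I \<longrightarrow> x $ k = 0"
  and u: "u = vert_mat R *\<^sub>v x" and unz: "u \<noteq> 0\<^sub>v NN"
  shows "ray u \<inter> conv_hull NN (vert R ` I) \<noteq> {}"
proof -
  define s where "s = (\<Sum>k<NN. x $ k)"
  have s0: "s \<ge> 0" unfolding s_def using nn by (auto intro: sum_nonneg)
  have sp: "s > 0"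
  proof (rule ccontr)
    assume "\<not> s > 0"
    with s0 have "s = 0" by simp
    then have "\<forall>k\<in>{..<NN}. x $ k = 0" unfolding s_def using nn
      by (subst (asm) sum_nonneg_eq_0_iff) auto
    then have "x = 0\<^sub>v NN" using x by (intro eq_vecI) auto
    then have "u = 0\<^sub>v NN" using u vert_mat_carrier[of R]
      by (auto intro!: eq_vecI simp: scalar_prod_def)
    with unz show False by simp
  qed
  define l where "l v = x $ (the_inv_into {..<NN} (vert R) v) / s" for v
  have lr: "l (vert R k) = x $ k / s" if "k < NN" for k
    unfolding l_def using the_inv_into_f_f[OF vert_inj[OF R]] that by simp
  have v1: "vec NN (\<lambda>k. if k \<in> I then l (vert R k) else 0) = (1/s) \<cdot>\<^sub>v x"
    using x lr out by (intro eq_vecI) auto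
  have lc: "lincomb NN l (vert R ` I) = (1/s) \<cdot>\<^sub>v u"
    unfolding lincomb_verts[OF R I] v1 u using vert_mat_carrier[of R] x by (simp add: mult_mat_vec)
  have inj: "inj_on (vert R) I" using vert_inj[OF R] I by (rule inj_on_subset)
  have "sum l (vert R ` I) = (\<Sum>k\<in>I. l (vert R k))" by (rule sum.reindex[OF inj, unfolded comp_def])
  also have "\<dots> = (\<Sum>k\<in>I. x $ k / s)" using lr I by (intro sum.cong) auto
  also have "\<dots> = (\<Sum>k<NN. x $ k / s)" using I out by (intro sum.mono_neutral_left) auto
  also have "\<dots> = 1" using sp unfolding s_def by (simp add: sum_divide_distrib[symmetric])
  finally have sl: "sum l (vert R ` I) = 1" .
  have lnn: "\<forall>v\<in>vert R ` I. 0 \<le> l v" using lr nn sp I by auto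
  have "(1/s) \<cdot>\<^sub>v u \<in> ray u" unfolding ray_def using sp by auto
  moreover have "(1/s) \<cdot>\<^sub>v u \<in> conv_hull NN (vert R ` I)"
    unfolding conv_hull_def using lc sl lnn by force
  ultimately show ?thesis by blast
qed

text \<open>A ray meeting the facet is spanned by a nonnegative combination of its vertices
  (the ray cannot hit it at 0, which is off the affine hull).\<close>
lemma ray_meets_facet_coords:
  assumes R: "R \<in> Rset d r c" and u: "u \<in> carrier_vec NN" and hit: "ray u \<inter> facet d r w c R \<noteq> {}"
  shows "\<exists>x\<in>carrier_vec NN. (\<forall>k<NN. 0 \<le> x $ k) \<and> u = vert_mat R *\<^sub>v x"
proof -
  from hit obtain t l where t: "0 \<le> t" and lnn: "\<forall>v\<in>vert R ` {..<NN}. 0 \<le> l v"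
    and sl: "sum l (vert R ` {..<NN}) = 1" and eq: "t \<cdot>\<^sub>v u = lincomb NN l (vert R ` {..<NN})"
    unfolding facet_def Phi_rem_z[OF R] ray_def conv_hull_def by auto
  define y where "y = vec NN (\<lambda>k. if k \<in> {..<NN} then l (vert R k) else 0)"
  have y: "y \<in> carrier_vec NN" unfolding y_def by simp
  have lc: "lincomb NN l (vert R ` {..<NN}) = vert_mat R *\<^sub>v y"
    unfolding y_def by (rule lincomb_verts[OF R subset_refl])
  have "t \<noteq> 0"
  proof
    assume "t = 0"
    moreover have "0 \<cdot>\<^sub>v u = 0\<^sub>v NN" using u by (intro eq_vecI) auto
    ultimately have "lincomb NN l (vert R ` {..<NN}) = 0\<^sub>v NN" using eq by simp
    then have "0\<^sub>v NN \<in> aff_hull NN (vert R ` {..<NN})" unfolding aff_hull_def using sl by force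
    with zero_off_aff_hull[OF R] show False by simp
  qed
  have "vert_mat R *\<^sub>v ((1/t) \<cdot>\<^sub>v y) = (1/t) \<cdot>\<^sub>v (t \<cdot>\<^sub>v u)" using lc eq vert_mat_carrier[of R] y
    by (simp add: mult_mat_vec)
  also have "\<dots> = u" using \<open>t \<noteq> 0\<close> by (simp add: smult_smult_assoc)
  finally have u_eq: "u = vert_mat R *\<^sub>v ((1/t) \<cdot>\<^sub>v y)" by simp
  have nn: "\<forall>k<NN. 0 \<le> ((1/t) \<cdot>\<^sub>v y) $ k" using t lnn unfolding y_def by auto
  show ?thesis by (rule bexI[of _ "(1/t) \<cdot>\<^sub>v y"]) (use u_eq nn y in simp_all)
qed

lemma hit_iff: assumes R: "R \<in> Rset d r c" and u: "u \<in> carrier_vec NN" and unz: "u \<noteq> 0\<^sub>v NN"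
  shows "ray u \<inter> facet d r w c R \<noteq> {} \<longleftrightarrow> ps.in_cone R u"
proof
  assume "ray u \<inter> facet d r w c R \<noteq> {}"
  then obtain x where x: "x \<in> carrier_vec NN" "\<forall>k<NN. 0 \<le> x $ k" "u = vert_mat R *\<^sub>v x"
    using ray_meets_facet_coords[OF R u] by blast
  show "ps.in_cone R u" unfolding ps.in_cone_def
  proof (intro allI impI)
    fix j assume j: "j < NN"
    have "ps.D R j u = x $ j * det (vert_mat R)" using ps.D_cramer[OF R j x(1)] x(3) by simp
    then show "0 \<le> ps.D R j u * det (vert_mat R)" using x(2) j by (simp add: mult.assoc)
  qed
next
  assume ind: "ps.in_cone R u"
  define x where "x = vec NN (\<lambda>j. ps.D R j u / det (vert_mat R))"
  have ux: "u = vert_mat R *\<^sub>v x" unfolding x_def by (rule ps.cramer_coords[OF R u])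
  have nn: "\<forall>k<NN. 0 \<le> x $ k" unfolding x_def using ind unfolding ps.in_cone_def
    by (auto simp: zero_le_divide_iff zero_le_mult_iff)
  have "ray u \<inter> conv_hull NN (vert R ` {..<NN}) \<noteq> {}"
    by (rule cone_hit[OF R subset_refl _ nn _ ux unz]) (auto simp: x_def)
  then show "ray u \<inter> facet d r w c R \<noteq> {}" unfolding facet_def Phi_rem_z[OF R] .
qed

text \<open>A generic ray misses all ridges, so its direction is a generic point: a vanishing
  Cramer coordinate would put the ray through the ridge opposite that vertex.\<close>
lemma generic_of_generic_ray: assumes u: "u \<in> carrier_vec NN" and unz: "u \<noteq> 0\<^sub>v NN"
  and g: "generic_ray d r w c (ray u)"
  shows "ps.generic u"
  unfolding ps.generic_def
proof (intro ballI allI impI notI)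
  fix R j assume R: "R \<in> Rset d r c" and j: "j < NN" and z0: "ps.D R j u = 0"
    and ind: "ps.in_cone R u"
  define x where "x = vec NN (\<lambda>j. ps.D R j u / det (vert_mat R))"
  have ux: "u = vert_mat R *\<^sub>v x" unfolding x_def by (rule ps.cramer_coords[OF R u])
  have nn: "\<forall>k<NN. 0 \<le> x $ k" unfolding x_def using ind unfolding ps.in_cone_def
    by (auto simp: zero_le_divide_iff zero_le_mult_iff)
  have "ray u \<inter> conv_hull NN (vert R ` ({..<NN} - {j})) \<noteq> {}"
    by (rule cone_hit[OF R _ _ nn _ ux unz]) (use z0 in \<open>auto simp: x_def\<close>)
  moreover have "c (j+1) \<in> G - {z}" using j c_eq_iff[of "j+1" "NN+1"] z_eq unfolding G_eq by auto
  then have "ray u \<inter> conv_hull NN (Phi r w (rem (rem R z) (c (j+1)))) = {}"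
    using g R unfolding generic_ray_def by blast
  ultimately show False using Phi_ridge[OF R j] by simp
qed

lemma deg_eq_F: assumes u: "u \<in> carrier_vec NN" and unz: "u \<noteq> 0\<^sub>v NN"
  shows "deg d r w c (ray u) = ps.F u"
proof -
  have gs: "gsgn d r w c R = sgn (det (vert_mat R))" for R
  proof -
    have "mat NN NN (\<lambda>(j, k). phi w (cls r R (c (j + 1))) (c (j + 1)) $ k) = transpose_mat (vert_mat R)"
      unfolding vert_mat_def vert_def by (intro eq_matI) auto
    then show ?thesis unfolding gsgn_def using det_transpose[OF vert_mat_carrier] by simp
  qed
  have "deg d r w c (ray u) = (\<Sum>R\<in>Rset d r c. if ray u \<inter> facet d r w c R \<noteq> {} then sgnR d r w c R else 0)"
    unfolding deg_def by (rule sum.inter_filter[OF Rset_fin])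
  also have "\<dots> = (\<Sum>R\<in>Rset d r c. ps.weight R u)"
    unfolding ps.weight_def sgnR_def gs using hit_iff[OF _ u unz] by (intro sum.cong) auto
  finally show ?thesis unfolding ps.F_def .
qed

end
theorem lemma9:
  fixes d r :: nat and w c :: "nat \<Rightarrow> real vec" and u v :: "real vec"
  assumes "2 \<le> r"
    and "regular_simplex_centered r w"
    and "bmz d r c"
    and "suff_general_position d r w c"
    and "u \<in> carrier_vec (bmzN d r)" and "u \<noteq> 0\<^sub>v (bmzN d r)"
    and "v \<in> carrier_vec (bmzN d r)" and "v \<noteq> 0\<^sub>v (bmzN d r)"
    and "generic_ray d r w c (ray u)"
    and "generic_ray d r w c (ray v)"
  shows "deg d r w c (ray u) = deg d r w c (ray v)"
proof -
  interpret bmz_setting d r w c by unfold_locales (use assms in auto)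
  have "ps.generic u" and "ps.generic v"
    using generic_of_generic_ray assms(5-10) by auto
  then have "ps.F u = ps.F v" by (rule ps.F_generic_eq[OF assms(5,7)])
  then show ?thesis using deg_eq_F[OF assms(5,6)] deg_eq_F[OF assms(7,8)] by simp
qed

end
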